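(* Let $m\ge1$, $\mathbf x=(x_1,\dots,x_{m+1})$, $\mathbf y=(y_1,\dots,y_{m+1})$, and $\widetilde Z_{\mathrm{HT}}(2m+1;\mathbf x,\mathbf y)=\big[\prod_{i=1}^m x_i^{2m}y_i^{2m}\big]x_{m+1}^my_{m+1}^mZ_{\mathrm{HT}}(2m+1;\mathbf x,\mathbf y)$, which is a polynomial. Then \[ \widetilde Z_{\mathrm{HT}}(2m+1;\mathbf x,\mathbf y)=\Big[\prod_{i=1}^m x_i^{4m}\Big]x_{m+1}^{2m}C_{\mathrm{HT}}(2m+1)+(\text{terms of lower total degree in }x_1,\dots,x_{m+1}),\qquad C_{\mathrm{HT}}(2m+1)=\prod_{i=2}^{2m+1}\sigma(a^i). \]
   Context: Notation: $\bar z=z^{-1}$, $\sigma(z)=z-z^{-1}$; $a$ is a fixed nonzero parameter. Vertex weights: at a vertex where a horizontal and a vertical line cross, the four incident edges are oriented with exactly two pointing in. Type 1: horizontal edges in, vertical out; type 2: horizontal out, vertical in; type 3: horizontal right, vertical up; type 4: horizontal left, vertical down; type 5: horizontal left, vertical up; type 6: horizontal right, vertical down. A vertex with spectral parameter $z$ has weight $\sigma(a^2)$ (types 1,2), $\sigma(az)$ (types 3,4), $\sigma(a\bar z)$ (types 5,6). A state is an orientation of internal edges satisfying the two-in rule at every vertex; the partition function is the sum over states of the product of vertex weights. Odd half-turn model $Z_{\mathrm{HT}}(2m+1;\mathbf x,\mathbf y)$: vertices $(r,j)$ with $1\le r\le 2m+1$ (from the top), $1\le j\le m$ (from the left), and $(r,m+1)$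 with $m+2\le r\le 2m+1$; vertex $(r,j)$ has parameter $x_{\min(r,2m+2-r)}\bar y_j$. Edges join consecutive vertices in rows and columns. Left boundary edges point right (into the grid), top boundary edges of columns $1,\dots,m$ point up, bottom boundary edges of columns $1,\dots,m+1$ point down. The edge to the right of $(m+1,m)$ and the edge above $(m+2,m+1)$ form a single edge, pointing right out of $(m+1,m)$ iff pointing down into $(m+2,m+1)$. For each $r\le m$ the edges to the right of $(r,m)$ and of $(2m+2-r,m+1)$ form a single edge with one orientation (out of one vertex, into the other). *)

theory Defs
  imports Complex_Main
begin

definition sig :: "complex \<Rightarrow> complex" where
  "sig z = z - inverse z"

definition ht_vert :: "nat \<Rightarrow> (nat \<times> nat) set" where
  "ht_vert m = {(r,j). 1 \<le> r \<and> r \<le> 2*m+1 \<and> 1 \<le> j \<and> j \<le> m}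
             \<union> {(r,j). j = m+1 \<and> m+2 \<le> r \<and> r \<le> 2*m+1}"

(* A state is encoded by a pair (H,V) of sets of vertices:
   (r,j) \<in> H  iff the edge to the right of vertex (r,j) points right;
   (r,j) \<in> V  iff the edge above vertex (r,j) points up
   (only for r \<ge> 2; edges above row 1 are boundary edges). *)

(* orientation of the four edges at vertex (r,j): (left edge points right,
   right edge points right, top edge points up, bottom edge points down) *)
definition ht_left :: "nat \<Rightarrow> (nat \<times> nat) set \<Rightarrow> nat \<Rightarrow> nat \<Rightarrow> bool" where
  "ht_left m H r j = (if j = 1 then True else (r, j-1) \<in> H)"
definition ht_right :: "nat \<Rightarrow> (nat \<times> nat) set \<Rightarrow> nat \<Rightarrow> nat \<Rightarrow> bool" where
  "ht_right m H r j = ((r, j) \<in> H)"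
definition ht_up :: "nat \<Rightarrow> (nat \<times> nat) set \<Rightarrow> nat \<Rightarrow> nat \<Rightarrow> bool" where
  "ht_up m V r j = (if r = 1 then True else (r, j) \<in> V)"
definition ht_down :: "nat \<Rightarrow> (nat \<times> nat) set \<Rightarrow> nat \<Rightarrow> nat \<Rightarrow> bool" where
  "ht_down m V r j = (if r = 2*m+1 then True else (r+1, j) \<notin> V)"

definition vtype :: "bool \<Rightarrow> bool \<Rightarrow> bool \<Rightarrow> bool \<Rightarrow> nat" where
  "vtype L R U D =
     (if L \<and> \<not> R \<and> U \<and> D then 1
      else if \<not> L \<and> R \<and> \<not> U \<and> \<not> D then 2
      else if L \<and> R \<and> U \<and> \<not> D then 3
      else if \<not> L \<and> \<not> R \<and> \<not> U \<and> D then 4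
      else if \<not> L \<and> \<not> R \<and> U \<and> \<not> D then 5
      else if L \<and> R \<and> \<not> U \<and> D then 6
      else 0)"

definition vweight :: "complex \<Rightarrow> nat \<Rightarrow> complex \<Rightarrow> complex" where
  "vweight a t z =
     (if t = 1 \<or> t = 2 then sig (a^2)
      else if t = 3 \<or> t = 4 then sig (a * z)
      else if t = 5 \<or> t = 6 then sig (a * inverse z)
      else 0)"

(* admissible states: H \<subseteq> vertices, V \<subseteq> vertices not in row 1,
   gluing conditions, and two-in rule at every vertex *)
definition ht_states :: "nat \<Rightarrow> ((nat \<times> nat) set \<times> (nat \<times> nat) set) set" where
  "ht_states m = {(H,V). H \<subseteq> ht_vert m \<and> V \<subseteq> {v \<in> ht_vert m. 2 \<le> fst v}
      \<and> (((m+1, m) \<in> H) \<longleftrightarrow> (m+2, m+1) \<notin> V)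
      \<and> (\<forall>r\<in>{1..m}. ((r, m) \<in> H) \<longleftrightarrow> (2*m+2-r, m+1) \<notin> H)
      \<and> (\<forall>(r,j)\<in>ht_vert m.
            vtype (ht_left m H r j) (ht_right m H r j) (ht_up m V r j) (ht_down m V r j) \<noteq> 0)}"

definition ht_param :: "nat \<Rightarrow> (nat \<Rightarrow> complex) \<Rightarrow> (nat \<Rightarrow> complex) \<Rightarrow> nat \<Rightarrow> nat \<Rightarrow> complex" where
  "ht_param m x y r j = x (min r (2*m+2-r)) * inverse (y j)"

definition Z_HT :: "complex \<Rightarrow> nat \<Rightarrow> (nat \<Rightarrow> complex) \<Rightarrow> (nat \<Rightarrow> complex) \<Rightarrow> complex" where
  "Z_HT a m x y = (\<Sum>(H,V)\<in>ht_states m. \<Prod>(r,j)\<in>ht_vert m.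
       vweight a (vtype (ht_left m H r j) (ht_right m H r j) (ht_up m V r j) (ht_down m V r j))
               (ht_param m x y r j))"

definition Zt_HT :: "complex \<Rightarrow> nat \<Rightarrow> (nat \<Rightarrow> complex) \<Rightarrow> (nat \<Rightarrow> complex) \<Rightarrow> complex" where
  "Zt_HT a m x y = (\<Prod>i=1..m. x i ^ (2*m) * y i ^ (2*m)) * x (m+1) ^ m * y (m+1) ^ m * Z_HT a m x y"

definition C_HT :: "complex \<Rightarrow> nat \<Rightarrow> complex" where
  "C_HT a m = (\<Prod>i=2..2*m+1. sig (a ^ i))"

end

theory Submission
  imports Defs "HOL-Combinatorics.Multiset_Permutations"
begin

text \<open>
  At a \<^emph>\<open>flip\<close>, a vertex of type 1 or 2, the
  weight \<open>\<sigma>(a\<^sup>2)\<close> does not involve the spectral parameter; at every other vertex \<open>(r, j)\<close>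
  the weight times \<open>x\<^sub>i y\<^sub>j\<close>, where \<open>i = min r (2m + 2 - r)\<close>, equals
  \<open>c x\<^sub>i\<^sup>2 - c\<^sup>-\<^sup>1 y\<^sub>j\<^sup>2\<close> with \<open>c \<in> {a, -a\<^sup>-\<^sup>1}\<close>. Every block of rows
  \<open>{i, 2m + 2 - i}\<close> with \<open>i \<le> m\<close> and every column \<open>j \<le> m\<close> contains a flip, so the
  normalising monomial absorbs these factors \<open>x\<^sub>i y\<^sub>j\<close>, and each state contributes a
  polynomial of \<open>x\<close>-degree at most \<open>(2m\<^sup>2 + m) + N \<le> 4m\<^sup>2 + 2m\<close>, \<open>N\<close> being the number
  of vertices that are not flips.

  Equality holds only for the maximal states, with exactly one flip in each of these blocks and
  columns and no other flips. They correspond to a permutation (the columns of the flips) and a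
  set \<open>B\<close> (the blocks whose flip lies in the lower row), and their top coefficient is
  \<open>\<sigma>(a\<^sup>2)\<^sup>m\<close> times a product over the blocks of \<open>a\<^bsup>4n\<^sub>i+3\<^esup>\<close> (for \<open>i \<in> B\<close>) or
  \<open>-a\<^bsup>-(4n\<^sub>i+3)\<^esup>\<close>, where \<open>n\<^sub>i\<close> counts the later larger entries of the permutation.
  Summing over \<open>B\<close> gives \<open>\<Prod>\<^sub>i \<sigma>(a\<^bsup>4n\<^sub>i+3\<^esup>)\<close>, summing over the permutations gives
  \<open>\<Prod>\<^sub>p \<Sum>\<^sub>k\<^sub><\<^sub>p \<sigma>(a\<^bsup>4k+3\<^esup>)\<close>, and this telescopes to \<^const>\<open>C_HT\<close>.
\<close>

lemma sum_Pow_prod_if: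
  assumes "finite A"
  shows "(\<Sum>X\<in>Pow A. \<Prod>i\<in>A. if i \<in> X then f i else g i) = (\<Prod>i\<in>A. f i + (g i :: 'a::comm_semiring_1))"
proof -
  have "(\<Prod>i\<in>A. if i \<in> X then f i else g i) = prod f X * prod g (A - X)" if "X \<subseteq> A" for X
    using assms that by (simp add: prod.If_cases Int_absorb1 Diff_eq)
  then show ?thesis
    by (simp add: prod_add[OF assms])
qed

lemma prod_offdiag_pairs:
  fixes F :: "'a::linorder \<Rightarrow> 'a \<Rightarrow> 'b::comm_monoid_mult"
  assumes "finite I"
  shows "(\<Prod>i\<in>I. \<Prod>k\<in>I-{i}. F i k) = (\<Prod>i\<in>I. \<Prod>k\<in>{k\<in>I. i < k}. F i k * F k i)"
proof -
  have split: "(\<Prod>k\<in>I-{i}. F i k) = (\<Prod>k\<in>{k\<in>I. i < k}. F i k) * (\<Prod>k\<in>{k\<in>I. k < i}. F i k)" for i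
  proof -
    have e: "I - {i} = {k\<in>I. i < k} \<union> {k\<in>I. k < i}" by auto
    have "(\<Prod>k\<in>{k\<in>I. i < k} \<union> {k\<in>I. k < i}. F i k)
        = (\<Prod>k\<in>{k\<in>I. i < k}. F i k) * (\<Prod>k\<in>{k\<in>I. k < i}. F i k)"
      using assms by (intro prod.union_disjoint) auto
    then show ?thesis unfolding e .
  qed
  have sw: "(\<Prod>i\<in>I. \<Prod>k\<in>{k\<in>I. k < i}. F i k) = (\<Prod>k\<in>I. \<Prod>i\<in>{i\<in>I. k < i}. F i k)"
    using prod.swap_restrict[OF assms assms, of "\<lambda>i k. F i k" "\<lambda>i k. k < i"] by simp
  show ?thesis unfolding split prod.distrib sw by simp
qed

lemma prod_eq_prod_power_card_fibres:
  fixes z :: "'b \<Rightarrow> 'c::comm_monoid_mult"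
  assumes "finite A" "finite I" "g ` A \<subseteq> I"
  shows "(\<Prod>v\<in>A. z (g v)) = (\<Prod>i\<in>I. z i ^ card {v \<in> A. g v = i})"
proof -
  have "(\<Prod>v\<in>{v \<in> A. g v = i}. z (g v)) = z i ^ card {v \<in> A. g v = i}" for i
    by simp
  then show ?thesis using prod.group[OF assms, of "\<lambda>v. z (g v)"] by simp
qed

lemma card_Diff_le_if_Int_nonempty:
  assumes "finite A" "A \<inter> F \<noteq> {}"
  shows "card (A - F) \<le> card A - 1"
proof -
  have "card (A \<inter> F) \<ge> 1"
    using assms by (simp add: Suc_le_eq card_gt_0_iff)
  then show ?thesis
    using assms(1) by (simp add: card_Diff_subset_Int)
qed

lemma card_Diff_eq_iff_card_Int:
  assumes "finite A" "card A = n + k"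
  shows "card (A - F) = n \<longleftrightarrow> card (A \<inter> F) = k"
  using assms card_Diff_subset_Int[of A F] card_mono[of A "A \<inter> F"] by auto

section \<open>Permutations weighted by their larger later entries\<close>

fun lehmer_weight :: "(nat \<Rightarrow> 'a::comm_semiring_1) \<Rightarrow> 'b::linorder list \<Rightarrow> 'a" where
  "lehmer_weight h [] = 1"
| "lehmer_weight h (x # xs) = h (card {y \<in> set xs. x < y}) * lehmer_weight h xs"

lemma bij_betw_card_greater:
  fixes S :: "'a::linorder set"
  assumes "finite S"
  shows "bij_betw (\<lambda>x. card {y \<in> S. x < y}) S {..<card S}"
proof -
  let ?f = "\<lambda>x. card {y \<in> S. x < y}"
  have less: "?f x' < ?f x" if "x \<in> S" "x' \<in> S" "x < x'" for x x'
    using that assms by (intro psubset_card_mono) auto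
  have inj: "inj_on ?f S"
  proof (rule inj_onI, rule ccontr)
    fix x x' assume "x \<in> S" "x' \<in> S" "?f x = ?f x'" "x \<noteq> x'"
    then show False using less[of x x'] less[of x' x] by (cases x x' rule: linorder_cases) auto
  qed
  have "?f x < card S" if "x \<in> S" for x
    using that assms by (intro psubset_card_mono) auto
  then have "?f ` S \<subseteq> {..<card S}" by auto
  moreover have "card (?f ` S) = card {..<card S}"
    using card_image[OF inj] by simp
  ultimately have "?f ` S = {..<card S}" by (intro card_subset_eq) auto
  with inj show ?thesis by (simp add: bij_betw_def)
qed

lemma sum_lehmer_weight_permutations_of_set:
  fixes h :: "nat \<Rightarrow> 'a::comm_semiring_1"
  assumes "finite S"
  shows "(\<Sum>xs\<in>permutations_of_set S. lehmer_weight h xs) = (\<Prod>p=1..card S. \<Sum>k<p. h k)"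
  using assms
proof (induction "card S" arbitrary: S)
  case 0
  then show ?case by simp
next
  case (Suc n)
  then have "S \<noteq> {}" by auto
  have IH: "(\<Sum>xs\<in>permutations_of_set (S - {x}). lehmer_weight h xs) = (\<Prod>p=1..n. \<Sum>k<p. h k)"
    if "x \<in> S" for x
    using Suc that by (metis card_Diff_singleton diff_Suc_1 finite_Diff)
  have greater: "{y \<in> set ys. x < y} = {y \<in> S. x < y}"
    if "x \<in> S" "ys \<in> permutations_of_set (S - {x})" for x ys
    using that by (auto dest: permutations_of_setD)
  have "(\<Sum>xs\<in>permutations_of_set S. lehmer_weight h xs)
      = (\<Sum>x\<in>S. \<Sum>ys\<in>permutations_of_set (S - {x}). lehmer_weight h (x # ys))"
    unfolding permutations_of_set_nonempty[OF \<open>S \<noteq> {}\<close>] using Suc.prems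
    by (subst sum.UNION_disjoint) (auto simp: sum.reindex inj_on_def)
  also have "\<dots> = (\<Sum>x\<in>S. h (card {y \<in> S. x < y}) * (\<Prod>p=1..n. \<Sum>k<p. h k))"
    by (intro sum.cong refl) (simp add: greater IH flip: sum_distrib_left)
  also have "\<dots> = (\<Sum>x\<in>S. h (card {y \<in> S. x < y})) * (\<Prod>p=1..n. \<Sum>k<p. h k)"
    by (simp add: sum_distrib_right)
  also have "(\<Sum>x\<in>S. h (card {y \<in> S. x < y})) = (\<Sum>k<card S. h k)"
    using sum.reindex_bij_betw[OF bij_betw_card_greater[OF Suc.prems]] .
  finally show ?case
    using Suc.hyps(2)[symmetric] by (simp add: prod.nat_ivl_Suc' mult.commute)
qed

definition greater_after :: "'a::linorder list \<Rightarrow> nat \<Rightarrow> nat" where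
  "greater_after xs i = card {k. i < k \<and> k < length xs \<and> xs ! i < xs ! k}"

lemma greater_after_Cons_Suc: "greater_after (x # xs) (Suc i) = greater_after xs i"
proof -
  have "{k. Suc i < k \<and> k < length (x # xs) \<and> (x # xs) ! Suc i < (x # xs) ! k}
      = Suc ` {k. i < k \<and> k < length xs \<and> xs ! i < xs ! k}"
    by (auto simp: image_iff Suc_less_eq2)
  then show ?thesis
    unfolding greater_after_def by (simp add: card_image)
qed

lemma greater_after_Cons_0:
  assumes "distinct xs"
  shows "greater_after (x # xs) 0 = card {y \<in> set xs. x < y}"
proof -
  have "{k. 0 < k \<and> k < length (x # xs) \<and> x < (x # xs) ! k} = Suc ` {k. k < length xs \<and> x < xs ! k}"
    by (auto simp: image_iff gr0_conv_Suc)
  moreover have "{y \<in> set xs. x < y} = (!) xs ` {k. k < length xs \<and> x < xs ! k}"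
    by (auto simp: in_set_conv_nth)
  moreover have "inj_on ((!) xs) {k. k < length xs \<and> x < xs ! k}"
    using assms by (auto simp: inj_on_def nth_eq_iff_index_eq)
  ultimately show ?thesis
    unfolding greater_after_def by (simp add: card_image)
qed

lemma lehmer_weight_conv_greater_after:
  "distinct xs \<Longrightarrow> lehmer_weight h xs = (\<Prod>i<length xs. h (greater_after xs i))"
proof (induction xs)
  case (Cons x xs)
  then show ?case
    unfolding length_Cons prod.lessThan_Suc_shift
    by (simp add: greater_after_Cons_Suc greater_after_Cons_0)
qed simp

section \<open>A product formula for \<^const>\<open>C_HT\<close>\<close>

lemma sig_identity:
  fixes a t :: complex
  assumes "a \<noteq> 0" "t \<noteq> 0"
  shows "sig (a^2) * sig (a^3 * t^4) + sig (t^2) * sig (a * t^2) = sig (a^2 * t^2) * sig (a^3 * t^2)"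
  using assms unfolding sig_def by (simp add: field_simps) algebra

lemma sig_mult_sum_sig_odd_powers:
  fixes a :: complex
  assumes "a \<noteq> 0"
  shows "sig (a^2) * (\<Sum>k<p. sig (a^(4*k+3))) = sig (a^(2*p)) * sig (a^(2*p+1))"
proof (induction p)
  case 0
  then show ?case by (simp add: sig_def)
next
  case (Suc p)
  have pow: "a^(4*p+3) = a^3 * (a^p)^4" "a^(2*p) = (a^p)^2" "a^(2*p+1) = a * (a^p)^2"
    "a^(2*Suc p) = a^2 * (a^p)^2" "a^(2*Suc p+1) = a^3 * (a^p)^2"
    by (simp_all add: power_mult[symmetric] power_add[symmetric] ac_simps eval_nat_numeral)
  have "sig (a^2) * (\<Sum>k<Suc p. sig (a^(4*k+3)))
      = sig (a^2) * sig (a^(4*p+3)) + sig (a^(2*p)) * sig (a^(2*p+1))"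
    using Suc by (simp add: distrib_left)
  also have "\<dots> = sig (a^(2*Suc p)) * sig (a^(2*Suc p+1))"
    unfolding pow using assms by (intro sig_identity) auto
  finally show ?case .
qed

lemma C_HT_eq_prod_sums:
  fixes a :: complex
  assumes "a \<noteq> 0"
  shows "C_HT a m = sig (a^2)^m * (\<Prod>p=1..m. \<Sum>k<p. sig (a^(4*k+3)))"
proof (induction m)
  case 0
  then show ?case by (simp add: C_HT_def)
next
  case (Suc m)
  have "{2..2*Suc m+1} = insert (2*m+3) (insert (2*m+2) {2..2*m+1})" by auto
  then have "C_HT a (Suc m) = sig (a^(2*m+2)) * sig (a^(2*m+3)) * C_HT a m"
    by (simp add: C_HT_def)
  also have "sig (a^(2*m+2)) * sig (a^(2*m+3)) = sig (a^2) * (\<Sum>k<Suc m. sig (a^(4*k+3)))"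
    using sig_mult_sum_sig_odd_powers[OF assms, of "Suc m"] by (simp add: numeral_eq_Suc)
  finally show ?case
    using Suc.IH by (simp add: prod.nat_ivl_Suc' ac_simps)
qed

section \<open>Polynomials of bounded \<open>x\<close>-degree\<close>

type_synonym xy_fun = "(nat \<Rightarrow> complex) \<Rightarrow> (nat \<Rightarrow> complex) \<Rightarrow> complex"

definition xy_monomial :: "nat \<Rightarrow> (nat \<Rightarrow> nat) \<Rightarrow> (nat \<Rightarrow> nat) \<Rightarrow> xy_fun" where
  "xy_monomial n e f x y = (\<Prod>i=1..n. x i ^ e i * y i ^ f i)"

definition xdeg :: "nat \<Rightarrow> (nat \<Rightarrow> nat) \<Rightarrow> nat" where
  "xdeg n e = (\<Sum>i=1..n. e i)"

definition nonzero_args :: "nat \<Rightarrow> (nat \<Rightarrow> complex) \<Rightarrow> (nat \<Rightarrow> complex) \<Rightarrow> bool" where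
  "nonzero_args n x y \<longleftrightarrow> (\<forall>i\<in>{1..n}. x i \<noteq> 0 \<and> y i \<noteq> 0)"

text \<open>Agreement is required only where all \<open>x\<^sub>i\<close>, \<open>y\<^sub>i\<close> are nonzero, since \<^const>\<open>Z_HT\<close>
  divides by them.\<close>

definition poly_xdeg :: "nat \<Rightarrow> (nat \<Rightarrow> bool) \<Rightarrow> xy_fun \<Rightarrow> bool" where
  "poly_xdeg n P F \<longleftrightarrow> (\<exists>E c. finite E \<and> (\<forall>(e,f)\<in>E. P (xdeg n e)) \<and>
      (\<forall>x y. nonzero_args n x y \<longrightarrow> F x y = (\<Sum>(e,f)\<in>E. c (e,f) * xy_monomial n e f x y)))"

lemma poly_xdegE:
  assumes "poly_xdeg n P F"
  obtains E c where "finite E" "\<forall>(e,f)\<in>E. P (xdeg n e)"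
    "\<forall>x y. nonzero_args n x y \<longrightarrow> F x y = (\<Sum>(e,f)\<in>E. c (e,f) * xy_monomial n e f x y)"
  using assms unfolding poly_xdeg_def by blast

lemma poly_xdeg_cong:
  assumes "poly_xdeg n P F" "\<And>x y. nonzero_args n x y \<Longrightarrow> F x y = G x y"
  shows "poly_xdeg n P G"
proof -
  obtain E c where "finite E" "\<forall>(e,f)\<in>E. P (xdeg n e)"
    "\<forall>x y. nonzero_args n x y \<longrightarrow> F x y = (\<Sum>(e,f)\<in>E. c (e,f) * xy_monomial n e f x y)"
    using assms(1) by (rule poly_xdegE)
  then show ?thesis unfolding poly_xdeg_def using assms(2) by (intro exI[of _ E] exI[of _ c]) auto
qed

lemma poly_xdeg_mono:
  assumes "poly_xdeg n P F" "\<And>d. P d \<Longrightarrow> Q d"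
  shows "poly_xdeg n Q F"
proof -
  obtain E c where "finite E" "\<forall>(e,f)\<in>E. P (xdeg n e)"
    "\<forall>x y. nonzero_args n x y \<longrightarrow> F x y = (\<Sum>(e,f)\<in>E. c (e,f) * xy_monomial n e f x y)"
    using assms(1) by (rule poly_xdegE)
  then show ?thesis unfolding poly_xdeg_def using assms(2) by (intro exI[of _ E] exI[of _ c]) auto
qed

lemma poly_xdeg_zero: "poly_xdeg n P (\<lambda>x y. 0)"
  unfolding poly_xdeg_def by (rule exI[of _ "{}"]) auto

lemma poly_xdeg_monomial:
  assumes "P (xdeg n e)"
  shows "poly_xdeg n P (\<lambda>x y. xy_monomial n e f x y)"
  unfolding poly_xdeg_def using assms
  by (intro exI[of _ "{(e,f)}"] exI[of _ "\<lambda>_. 1"]) auto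

lemma poly_xdeg_cmult:
  assumes "poly_xdeg n P F"
  shows "poly_xdeg n P (\<lambda>x y. c * F x y)"
proof -
  obtain E d where E: "finite E" "\<forall>(e,f)\<in>E. P (xdeg n e)"
    "\<forall>x y. nonzero_args n x y \<longrightarrow> F x y = (\<Sum>(e,f)\<in>E. d (e,f) * xy_monomial n e f x y)"
    using assms by (rule poly_xdegE)
  show ?thesis unfolding poly_xdeg_def
    using E by (intro exI[of _ E] exI[of _ "\<lambda>p. c * d p"])
      (auto simp: sum_distrib_left case_prod_beta mult.assoc)
qed

lemma poly_xdeg_const:
  assumes "P 0"
  shows "poly_xdeg n P (\<lambda>x y. c)"
  using poly_xdeg_cmult[OF poly_xdeg_monomial[of P n "\<lambda>_. 0" "\<lambda>_. 0"], of c] assms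
  by (simp add: xdeg_def xy_monomial_def)

lemma poly_xdeg_add:
  assumes "poly_xdeg n P F" "poly_xdeg n P G"
  shows "poly_xdeg n P (\<lambda>x y. F x y + G x y)"
proof -
  obtain E c where E: "finite E" "\<forall>(e,f)\<in>E. P (xdeg n e)"
    "\<forall>x y. nonzero_args n x y \<longrightarrow> F x y = (\<Sum>(e,f)\<in>E. c (e,f) * xy_monomial n e f x y)"
    using assms(1) by (rule poly_xdegE)
  obtain E' c' where E': "finite E'" "\<forall>(e,f)\<in>E'. P (xdeg n e)"
    "\<forall>x y. nonzero_args n x y \<longrightarrow> G x y = (\<Sum>(e,f)\<in>E'. c' (e,f) * xy_monomial n e f x y)"
    using assms(2) by (rule poly_xdegE)
  define d where "d p = (if p \<in> E then c p else 0) + (if p \<in> E' then c' p else 0)" for p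
  have "F x y + G x y = (\<Sum>(e,f)\<in>E \<union> E'. d (e,f) * xy_monomial n e f x y)"
    if "nonzero_args n x y" for x y
  proof -
    let ?M = "\<lambda>p. xy_monomial n (fst p) (snd p) x y"
    have "(\<Sum>p\<in>E \<union> E'. (if p \<in> E then c p else 0) * ?M p) = (\<Sum>p\<in>E. c p * ?M p)"
      "(\<Sum>p\<in>E \<union> E'. (if p \<in> E' then c' p else 0) * ?M p) = (\<Sum>p\<in>E'. c' p * ?M p)"
      using E(1) E'(1) by (auto intro: sum.mono_neutral_cong_right)
    then have "F x y + G x y = (\<Sum>p\<in>E \<union> E'. d p * ?M p)"
      using E(3) E'(3) that unfolding d_def
      by (simp add: case_prod_beta distrib_right sum.distrib)
    then show ?thesis by (simp add: case_prod_beta)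
  qed
  then show ?thesis unfolding poly_xdeg_def using E E'
    by (intro exI[of _ "E \<union> E'"] exI[of _ d]) auto
qed

lemma poly_xdeg_sum:
  assumes "finite A" "\<And>a. a \<in> A \<Longrightarrow> poly_xdeg n P (F a)"
  shows "poly_xdeg n P (\<lambda>x y. \<Sum>a\<in>A. F a x y)"
  using assms by (induction A rule: finite_induct) (simp_all add: poly_xdeg_zero poly_xdeg_add)

lemma xy_monomial_mult:
  "xy_monomial n e f x y * xy_monomial n e' f' x y = xy_monomial n (\<lambda>i. e i + e' i) (\<lambda>i. f i + f' i) x y"
  unfolding xy_monomial_def by (simp add: prod.distrib[symmetric] power_add algebra_simps)

lemma xdeg_add: "xdeg n (\<lambda>i. e i + e' i) = xdeg n e + xdeg n e'"
  unfolding xdeg_def by (simp add: sum.distrib)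

lemma poly_xdeg_mult:
  assumes "poly_xdeg n P F" "poly_xdeg n Q G" "\<And>d1 d2. P d1 \<Longrightarrow> Q d2 \<Longrightarrow> R (d1 + d2)"
  shows "poly_xdeg n R (\<lambda>x y. F x y * G x y)"
proof -
  obtain E c where E: "finite E" "\<forall>(e,f)\<in>E. P (xdeg n e)"
    "\<forall>x y. nonzero_args n x y \<longrightarrow> F x y = (\<Sum>(e,f)\<in>E. c (e,f) * xy_monomial n e f x y)"
    using assms(1) by (rule poly_xdegE)
  obtain E' c' where E': "finite E'" "\<forall>(e,f)\<in>E'. Q (xdeg n e)"
    "\<forall>x y. nonzero_args n x y \<longrightarrow> G x y = (\<Sum>(e,f)\<in>E'. c' (e,f) * xy_monomial n e f x y)"
    using assms(2) by (rule poly_xdegE)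
  define g where "g q = ((\<lambda>i. fst (fst q) i + fst (snd q) i), (\<lambda>i. snd (fst q) i + snd (snd q) i))"
    for q :: "((nat \<Rightarrow> nat) \<times> (nat \<Rightarrow> nat)) \<times> ((nat \<Rightarrow> nat) \<times> (nat \<Rightarrow> nat))"
  define K where "K = E \<times> E'"
  define d where "d p = (\<Sum>q\<in>{q\<in>K. g q = p}. c (fst q) * c' (snd q))" for p
  have fK: "finite K" using E(1) E'(1) K_def by simp
  have deg: "R (xdeg n (fst p))" if p: "p \<in> g ` K" for p
  proof -
    obtain q where q: "q \<in> K" "p = g q" using p by blast
    then have "P (xdeg n (fst (fst q)))" "Q (xdeg n (fst (snd q)))"
      using E(2) E'(2) unfolding K_def by (auto simp: case_prod_beta)
    then show ?thesis
      using q assms(3) by (simp add: g_def xdeg_add)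
  qed
  have "F x y * G x y = (\<Sum>(e,f)\<in>g ` K. d (e,f) * xy_monomial n e f x y)"
    if "nonzero_args n x y" for x y
  proof -
    let ?M = "\<lambda>p. xy_monomial n (fst p) (snd p) x y"
    have "F x y * G x y = (\<Sum>p\<in>E. \<Sum>p'\<in>E'. (c p * ?M p) * (c' p' * ?M p'))"
      using E(3) E'(3) that by (simp add: case_prod_beta sum_product)
    also have "\<dots> = (\<Sum>q\<in>K. c (fst q) * c' (snd q) * ?M (g q))"
      unfolding K_def sum.cartesian_product
      by (intro sum.cong refl) (auto simp: g_def xy_monomial_mult[symmetric] algebra_simps)
    also have "\<dots> = (\<Sum>p\<in>g ` K. \<Sum>q\<in>{q\<in>K. g q = p}. c (fst q) * c' (snd q) * ?M (g q))"
      using sum.image_gen[OF fK] by blast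
    also have "\<dots> = (\<Sum>p\<in>g ` K. d p * ?M p)"
      unfolding d_def sum_distrib_right by (intro sum.cong refl) auto
    finally show ?thesis by (simp add: case_prod_beta)
  qed
  then show ?thesis unfolding poly_xdeg_def
    using fK deg by (intro exI[of _ "g ` K"] exI[of _ d]) (auto simp: case_prod_beta)
qed

lemma poly_xdeg_prod:
  assumes "finite A" "\<And>a. a \<in> A \<Longrightarrow> poly_xdeg n (\<lambda>d. d \<le> D a) (F a)"
  shows "poly_xdeg n (\<lambda>d. d \<le> (\<Sum>a\<in>A. D a)) (\<lambda>x y. \<Prod>a\<in>A. F a x y)"
  using assms
proof (induction A rule: finite_induct)
  case empty
  then show ?case by (simp add: poly_xdeg_const)
next
  case (insert a A)
  have "poly_xdeg n (\<lambda>d. d \<le> D a + (\<Sum>a\<in>A. D a)) (\<lambda>x y. F a x y * (\<Prod>a\<in>A. F a x y))"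
    using insert by (intro poly_xdeg_mult[of _ "\<lambda>d. d \<le> D a" _ "\<lambda>d. d \<le> (\<Sum>a\<in>A. D a)"]) auto
  then show ?case using insert by simp
qed

lemma poly_xdeg_prod_add_diff:
  assumes "finite A" "\<And>a. a \<in> A \<Longrightarrow> poly_xdeg n (\<lambda>d. d \<le> D a) (T a)"
    "\<And>a. a \<in> A \<Longrightarrow> poly_xdeg n (\<lambda>d. d < D a) (L a)"
  shows "poly_xdeg n (\<lambda>d. d < (\<Sum>a\<in>A. D a)) (\<lambda>x y. (\<Prod>a\<in>A. T a x y + L a x y) - (\<Prod>a\<in>A. T a x y))"
  using assms
proof (induction A rule: finite_induct)
  case empty
  then show ?case by (simp add: poly_xdeg_zero)
next
  case (insert a A)
  have "poly_xdeg n (\<lambda>d. d \<le> D b) (\<lambda>x y. T b x y + L b x y)" if "b \<in> insert a A" for b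
    using insert.prems[OF that] by (intro poly_xdeg_add) (auto elim: poly_xdeg_mono)
  then have TL: "poly_xdeg n (\<lambda>d. d \<le> (\<Sum>a\<in>A. D a)) (\<lambda>x y. \<Prod>a\<in>A. T a x y + L a x y)"
    using insert by (intro poly_xdeg_prod) auto
  have "poly_xdeg n (\<lambda>d. d < D a + (\<Sum>a\<in>A. D a))
      (\<lambda>x y. T a x y * ((\<Prod>a\<in>A. T a x y + L a x y) - (\<Prod>a\<in>A. T a x y)))"
    using insert by (intro poly_xdeg_mult[of _ "\<lambda>d. d \<le> D a" _ "\<lambda>d. d < (\<Sum>a\<in>A. D a)"]) auto
  moreover have "poly_xdeg n (\<lambda>d. d < D a + (\<Sum>a\<in>A. D a)) (\<lambda>x y. L a x y * (\<Prod>a\<in>A. T a x y + L a x y))"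
    using insert TL by (intro poly_xdeg_mult[of _ "\<lambda>d. d < D a" _ "\<lambda>d. d \<le> (\<Sum>a\<in>A. D a)"]) auto
  ultimately have "poly_xdeg n (\<lambda>d. d < D a + (\<Sum>a\<in>A. D a))
      (\<lambda>x y. T a x y * ((\<Prod>a\<in>A. T a x y + L a x y) - (\<Prod>a\<in>A. T a x y))
        + L a x y * (\<Prod>a\<in>A. T a x y + L a x y))"
    by (rule poly_xdeg_add)
  then show ?case
    using insert(1,2) by (simp add: algebra_simps)
qed

lemma xy_monomial_x_power:
  assumes "i \<in> {1..n}"
  shows "xy_monomial n (\<lambda>k. if k = i then p else 0) (\<lambda>_. 0) x y = x i ^ p"
proof -
  have "xy_monomial n (\<lambda>k. if k = i then p else 0) (\<lambda>_. 0) x y = (\<Prod>k\<in>{1..n}. if k = i then x k ^ p else 1)"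
    unfolding xy_monomial_def by (intro prod.cong refl) auto
  then show ?thesis using assms by (simp add: prod.delta)
qed

lemma xy_monomial_y_power:
  assumes "i \<in> {1..n}"
  shows "xy_monomial n (\<lambda>_. 0) (\<lambda>k. if k = i then p else 0) x y = y i ^ p"
proof -
  have "xy_monomial n (\<lambda>_. 0) (\<lambda>k. if k = i then p else 0) x y = (\<Prod>k\<in>{1..n}. if k = i then y k ^ p else 1)"
    unfolding xy_monomial_def by (intro prod.cong refl) auto
  then show ?thesis using assms by (simp add: prod.delta)
qed

lemma poly_xdeg_x_power:
  assumes "i \<in> {1..n}" "P p"
  shows "poly_xdeg n P (\<lambda>x y. c * x i ^ p)"
  using poly_xdeg_cmult[OF poly_xdeg_monomial[of P n "\<lambda>k. if k = i then p else 0" "\<lambda>_. 0"], of c] assms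
  by (simp add: xy_monomial_x_power xdeg_def sum.delta)

lemma poly_xdeg_y_power:
  assumes "i \<in> {1..n}" "P 0"
  shows "poly_xdeg n P (\<lambda>x y. c * y i ^ p)"
  using poly_xdeg_cmult[OF poly_xdeg_monomial[of P n "\<lambda>_. 0" "\<lambda>k. if k = i then p else 0"], of c] assms
  by (simp add: xy_monomial_y_power xdeg_def)

section \<open>Flips\<close>

type_synonym vertex = "nat \<times> nat"

definition ht_flip :: "nat \<Rightarrow> vertex set \<Rightarrow> nat \<Rightarrow> nat \<Rightarrow> bool" where
  "ht_flip m H r j \<longleftrightarrow> ht_left m H r j \<noteq> ht_right m H r j"

definition ht_flips :: "nat \<Rightarrow> vertex set \<Rightarrow> vertex set" where
  "ht_flips m H = {v \<in> ht_vert m. ht_flip m H (fst v) (snd v)}"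

definition ht_xindex :: "nat \<Rightarrow> nat \<Rightarrow> nat" where
  "ht_xindex m r = min r (2*m+2-r)"

definition ht_xblock :: "nat \<Rightarrow> nat \<Rightarrow> vertex set" where
  "ht_xblock m i = {v \<in> ht_vert m. ht_xindex m (fst v) = i}"

definition ht_column :: "nat \<Rightarrow> nat \<Rightarrow> vertex set" where
  "ht_column m j = {v \<in> ht_vert m. snd v = j}"

text \<open>The exponent of \<open>x\<^sub>i\<close> and of \<open>y\<^sub>i\<close> in the normalising factor of \<^const>\<open>Zt_HT\<close>.\<close>

definition ht_norm_exp :: "nat \<Rightarrow> nat \<Rightarrow> nat" where
  "ht_norm_exp m i = (if i \<le> m then 2*m else m)"

definition xblock_nonflips :: "nat \<Rightarrow> vertex set \<Rightarrow> nat \<Rightarrow> nat" where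
  "xblock_nonflips m H i = card (ht_xblock m i - ht_flips m H)"

definition column_nonflips :: "nat \<Rightarrow> vertex set \<Rightarrow> nat \<Rightarrow> nat" where
  "column_nonflips m H j = card (ht_column m j - ht_flips m H)"

lemma vtype_neq_0_iff:
  "vtype L R U D \<noteq> 0 \<longleftrightarrow> (L = R \<and> U \<noteq> D) \<or> (L \<and> \<not> R \<and> U \<and> D) \<or> (\<not> L \<and> R \<and> \<not> U \<and> \<not> D)"
  unfolding vtype_def by (cases L; cases R; cases U; cases D) auto

lemma vweight_vtype:
  assumes "vtype L R U D \<noteq> 0"
  shows "vweight a (vtype L R U D) z =
    (if L \<noteq> R then sig (a^2) else if R = U then sig (a * z) else sig (a * inverse z))"
  using assms unfolding vtype_def vweight_def by (cases L; cases R; cases U; cases D) auto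

lemma mem_ht_vert_iff:
  "(r,j) \<in> ht_vert m \<longleftrightarrow> (1 \<le> r \<and> r \<le> 2*m+1 \<and> 1 \<le> j \<and> j \<le> m) \<or> (j = m+1 \<and> m+2 \<le> r \<and> r \<le> 2*m+1)"
  unfolding ht_vert_def by auto

lemma finite_ht_vert: "finite (ht_vert m)"
proof -
  have "ht_vert m \<subseteq> {1..2*m+1} \<times> {1..m+1}" unfolding ht_vert_def by auto
  then show ?thesis by (rule finite_subset) auto
qed

lemma finite_ht_states: "finite (ht_states m)"
proof -
  have "ht_states m \<subseteq> Pow (ht_vert m) \<times> Pow (ht_vert m)" unfolding ht_states_def by auto
  then show ?thesis by (rule finite_subset) (simp add: finite_ht_vert)
qed

lemma ht_states_vtype_neq_0:
  assumes "(H,V) \<in> ht_states m" "(r,j) \<in> ht_vert m"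
  shows "vtype (ht_left m H r j) (ht_right m H r j) (ht_up m V r j) (ht_down m V r j) \<noteq> 0"
  using assms unfolding ht_states_def by auto

lemma ht_states_not_flip_iff:
  assumes "(H,V) \<in> ht_states m" "(r,j) \<in> ht_vert m"
  shows "\<not> ht_flip m H r j \<longleftrightarrow> ht_up m V r j \<noteq> ht_down m V r j"
  using ht_states_vtype_neq_0[OF assms] unfolding vtype_neq_0_iff ht_flip_def by auto

lemma ht_xindex_range: "v \<in> ht_vert m \<Longrightarrow> ht_xindex m (fst v) \<in> {1..m+1}"
  by (cases v) (auto simp: mem_ht_vert_iff ht_xindex_def)

lemma ht_column_range: "v \<in> ht_vert m \<Longrightarrow> snd v \<in> {1..m+1}"
  by (cases v) (auto simp: mem_ht_vert_iff)

lemma ht_xblock_low: "i \<in> {1..m} \<Longrightarrow> ht_xblock m i = {i} \<times> {1..m} \<union> {2*m+2-i} \<times> {1..m+1}"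
  unfolding ht_xblock_def by (auto simp: mem_ht_vert_iff ht_xindex_def)

lemma ht_xblock_middle: "ht_xblock m (m+1) = {m+1} \<times> {1..m}"
  unfolding ht_xblock_def by (auto simp: mem_ht_vert_iff ht_xindex_def)

lemma ht_column_low: "j \<in> {1..m} \<Longrightarrow> ht_column m j = {1..2*m+1} \<times> {j}"
  unfolding ht_column_def by (auto simp: mem_ht_vert_iff)

lemma ht_column_last: "ht_column m (m+1) = {m+2..2*m+1} \<times> {m+1}"
  unfolding ht_column_def by (auto simp: mem_ht_vert_iff)

lemma finite_ht_xblock: "finite (ht_xblock m i)"
  unfolding ht_xblock_def using finite_ht_vert by simp

lemma finite_ht_column: "finite (ht_column m j)"
  unfolding ht_column_def using finite_ht_vert by simp

lemma card_ht_xblock: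
  assumes "i \<in> {1..m+1}"
  shows "card (ht_xblock m i) = ht_norm_exp m i + (if i \<le> m then 1 else 0)"
proof (cases "i \<le> m")
  case True
  with assms have i: "i \<in> {1..m}" by simp
  then have "card (ht_xblock m i) = card ({i} \<times> {1..m}) + card ({2*m+2-i} \<times> {1..m+1})"
    unfolding ht_xblock_low[OF i] by (intro card_Un_disjoint) auto
  then show ?thesis using True by (simp add: ht_norm_exp_def)
next
  case False
  then have "i = m+1" using assms by simp
  then show ?thesis using ht_xblock_middle[of m] by (simp add: ht_norm_exp_def)
qed

lemma card_ht_column:
  assumes "j \<in> {1..m+1}"
  shows "card (ht_column m j) = ht_norm_exp m j + (if j \<le> m then 1 else 0)"
proof (cases "j \<le> m")
  case True
  then show ?thesis using assms by (simp add: ht_column_low ht_norm_exp_def)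
next
  case False
  then have "j = m+1" using assms by simp
  then show ?thesis using ht_column_last[of m] by (simp add: ht_norm_exp_def)
qed

lemma sum_ht_norm_exp: "(\<Sum>i=1..m+1. ht_norm_exp m i) = 2*m*m + m"
proof -
  have "(\<Sum>i=1..m. ht_norm_exp m i) = (\<Sum>i=1..m. 2*m)"
    by (intro sum.cong refl) (auto simp: ht_norm_exp_def)
  then show ?thesis by (simp add: ht_norm_exp_def)
qed

lemma mem_H_if_no_flip:
  assumes "\<forall>j\<in>{1..k}. \<not> ht_flip m H r j" "1 \<le> k"
  shows "(r,k) \<in> H"
  using assms
proof (induction k)
  case (Suc k)
  then show ?case
    by (cases "k = 0") (auto simp: ht_flip_def ht_left_def ht_right_def)
qed simp

text \<open>Without a flip both rows of the block carry only rightward arrows, which the gluing of their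
  right ends forbids.\<close>

lemma ht_xblock_has_flip:
  assumes st: "(H,V) \<in> ht_states m" and i: "i \<in> {1..m}"
  shows "ht_xblock m i \<inter> ht_flips m H \<noteq> {}"
proof
  assume "ht_xblock m i \<inter> ht_flips m H = {}"
  then have no_flip: "\<not> ht_flip m H r j" if "(r,j) \<in> ht_vert m" "ht_xindex m r = i" for r j
    using that unfolding ht_xblock_def ht_flips_def by auto
  have "\<forall>j\<in>{1..m}. \<not> ht_flip m H i j"
    using i by (intro ballI no_flip) (auto simp: mem_ht_vert_iff ht_xindex_def)
  then have "(i,m) \<in> H" using i by (intro mem_H_if_no_flip) auto
  then have "(2*m+2-i, m+1) \<notin> H" using st i unfolding ht_states_def by auto
  moreover have "\<forall>j\<in>{1..m+1}. \<not> ht_flip m H (2*m+2-i) j"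
    using i by (intro ballI no_flip) (auto simp: mem_ht_vert_iff ht_xindex_def)
  then have "(2*m+2-i, m+1) \<in> H" by (intro mem_H_if_no_flip) auto
  ultimately show False by simp
qed

text \<open>Without a flip, the upward arrow at the top boundary propagates down the column (at a
  vertex that is not a flip the arrows above and below point the same way), contradicting the
  downward arrow at the bottom boundary.\<close>

lemma ht_column_has_flip:
  assumes st: "(H,V) \<in> ht_states m" and j: "j \<in> {1..m}"
  shows "ht_column m j \<inter> ht_flips m H \<noteq> {}"
proof
  assume "ht_column m j \<inter> ht_flips m H = {}"
  note no_flip = this
  have up_ne_down: "ht_up m V r j \<noteq> ht_down m V r j" if "1 \<le> r" "r \<le> 2*m+1" for r
  proof -
    have v: "(r,j) \<in> ht_vert m" using that j by (auto simp: mem_ht_vert_iff)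
    then have "(r,j) \<in> ht_column m j" unfolding ht_column_def by simp
    then have "(r,j) \<notin> ht_flips m H" using no_flip by blast
    then have "\<not> ht_flip m H r j" using v unfolding ht_flips_def by simp
    then show ?thesis using ht_states_not_flip_iff[OF st v] by simp
  qed
  have up: "ht_up m V r j" if "1 \<le> r" "r \<le> 2*m+1" for r
    using that
  proof (induction r)
    case (Suc r)
    show ?case
    proof (cases "r = 0")
      case True
      then show ?thesis by (simp add: ht_up_def)
    next
      case False
      with Suc have "ht_up m V r j" "ht_up m V r j \<noteq> ht_down m V r j"
        using up_ne_down by auto
      then show ?thesis
        using Suc.prems by (auto simp: ht_up_def ht_down_def split: if_splits)
    qed
  qed simp
  show False
    using up[of "2*m+1"] up_ne_down[of "2*m+1"] by (simp add: ht_down_def)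
qed

lemma xblock_nonflips_le:
  assumes "(H,V) \<in> ht_states m" "i \<in> {1..m+1}"
  shows "xblock_nonflips m H i \<le> ht_norm_exp m i"
proof (cases "i \<le> m")
  case True
  with assms(2) have "i \<in> {1..m}" by simp
  then show ?thesis
    using card_Diff_le_if_Int_nonempty[OF finite_ht_xblock ht_xblock_has_flip[OF assms(1) \<open>i \<in> {1..m}\<close>]]
      card_ht_xblock[OF assms(2)] assms(2) unfolding xblock_nonflips_def by simp
next
  case False
  then show ?thesis
    using card_mono[OF finite_ht_xblock Diff_subset, of m i "ht_flips m H"] card_ht_xblock[OF assms(2)]
    unfolding xblock_nonflips_def by simp
qed

lemma column_nonflips_le:
  assumes "(H,V) \<in> ht_states m" "j \<in> {1..m+1}"
  shows "column_nonflips m H j \<le> ht_norm_exp m j"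
proof (cases "j \<le> m")
  case True
  with assms(2) have "j \<in> {1..m}" by simp
  then show ?thesis
    using card_Diff_le_if_Int_nonempty[OF finite_ht_column ht_column_has_flip[OF assms(1) \<open>j \<in> {1..m}\<close>]]
      card_ht_column[OF assms(2)] assms(2) unfolding column_nonflips_def by simp
next
  case False
  then show ?thesis
    using card_mono[OF finite_ht_column Diff_subset, of m j "ht_flips m H"] card_ht_column[OF assms(2)]
    unfolding column_nonflips_def by simp
qed

lemma card_nonflips_eq_sum_xblock:
  "card (ht_vert m - ht_flips m H) = (\<Sum>i=1..m+1. xblock_nonflips m H i)"
proof -
  have "(\<Sum>i=1..m+1. \<Sum>v\<in>{v \<in> ht_vert m - ht_flips m H. ht_xindex m (fst v) = i}. 1)
      = (\<Sum>v\<in>ht_vert m - ht_flips m H. 1::nat)"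
    using ht_xindex_range finite_ht_vert by (intro sum.group) auto
  moreover have "{v \<in> ht_vert m - ht_flips m H. ht_xindex m (fst v) = i} = ht_xblock m i - ht_flips m H" for i
    unfolding ht_xblock_def by auto
  ultimately show ?thesis unfolding xblock_nonflips_def by simp
qed

lemma card_nonflips_eq_sum_column:
  "card (ht_vert m - ht_flips m H) = (\<Sum>j=1..m+1. column_nonflips m H j)"
proof -
  have "(\<Sum>j=1..m+1. \<Sum>v\<in>{v \<in> ht_vert m - ht_flips m H. snd v = j}. 1)
      = (\<Sum>v\<in>ht_vert m - ht_flips m H. 1::nat)"
    using ht_column_range finite_ht_vert by (intro sum.group) auto
  moreover have "{v \<in> ht_vert m - ht_flips m H. snd v = j} = ht_column m j - ht_flips m H" for j
    unfolding ht_column_def by auto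
  ultimately show ?thesis unfolding column_nonflips_def by simp
qed

lemma card_nonflips_le:
  assumes "(H,V) \<in> ht_states m"
  shows "card (ht_vert m - ht_flips m H) \<le> 2*m*m + m"
  unfolding card_nonflips_eq_sum_xblock sum_ht_norm_exp[symmetric]
  using xblock_nonflips_le[OF assms] by (intro sum_mono) auto

lemma xblock_nonflips_eq_iff:
  assumes "i \<in> {1..m+1}"
  shows "xblock_nonflips m H i = ht_norm_exp m i
    \<longleftrightarrow> card (ht_xblock m i \<inter> ht_flips m H) = (if i \<le> m then 1 else 0)"
  unfolding xblock_nonflips_def using card_ht_xblock[OF assms]
  by (intro card_Diff_eq_iff_card_Int finite_ht_xblock)

lemma column_nonflips_eq_iff:
  assumes "j \<in> {1..m+1}"
  shows "column_nonflips m H j = ht_norm_exp m j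
    \<longleftrightarrow> card (ht_column m j \<inter> ht_flips m H) = (if j \<le> m then 1 else 0)"
  unfolding column_nonflips_def using card_ht_column[OF assms]
  by (intro card_Diff_eq_iff_card_Int finite_ht_column)

text \<open>Maximal states have exactly one flip in each block of rows \<open>i \<le> m\<close> and none in the middle
  row; only they reach the top \<open>x\<close>-degree.\<close>

definition ht_maximal :: "nat \<Rightarrow> vertex set \<Rightarrow> bool" where
  "ht_maximal m H \<longleftrightarrow> (\<forall>i\<in>{1..m+1}. xblock_nonflips m H i = ht_norm_exp m i)"

lemma card_nonflips_maximal:
  "ht_maximal m H \<Longrightarrow> card (ht_vert m - ht_flips m H) = 2*m*m + m"
  unfolding card_nonflips_eq_sum_xblock sum_ht_norm_exp[symmetric] ht_maximal_def
  by (intro sum.cong) auto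

lemma card_nonflips_less_if_not_maximal:
  assumes "(H,V) \<in> ht_states m" "\<not> ht_maximal m H"
  shows "card (ht_vert m - ht_flips m H) < 2*m*m + m"
proof -
  obtain i where i: "i \<in> {1..m+1}" "xblock_nonflips m H i \<noteq> ht_norm_exp m i"
    using assms(2) unfolding ht_maximal_def by blast
  then have "xblock_nonflips m H i < ht_norm_exp m i"
    using xblock_nonflips_le[OF assms(1) i(1)] by simp
  then show ?thesis
    unfolding card_nonflips_eq_sum_xblock sum_ht_norm_exp[symmetric]
    using i xblock_nonflips_le[OF assms(1)] by (intro sum_strict_mono_ex1) auto
qed

lemma column_nonflips_maximal:
  assumes "(H,V) \<in> ht_states m" "ht_maximal m H" "j \<in> {1..m+1}"
  shows "column_nonflips m H j = ht_norm_exp m j"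
proof (rule ccontr)
  assume "column_nonflips m H j \<noteq> ht_norm_exp m j"
  then have "column_nonflips m H j < ht_norm_exp m j"
    using column_nonflips_le[OF assms(1,3)] by simp
  then have "(\<Sum>j=1..m+1. column_nonflips m H j) < (\<Sum>j=1..m+1. ht_norm_exp m j)"
    using assms(3) column_nonflips_le[OF assms(1)] by (intro sum_strict_mono_ex1) auto
  then show False
    using card_nonflips_maximal[OF assms(2)] card_nonflips_eq_sum_column sum_ht_norm_exp by simp
qed

section \<open>The \<open>x\<close>-degree of a state term\<close>

lemma mult_sig_ratio:
  fixes a X Y :: complex
  assumes "a \<noteq> 0" "X \<noteq> 0" "Y \<noteq> 0"
  shows "X * Y * sig (a * (X / Y)) = a * X^2 - inverse a * Y^2"
    and "X * Y * sig (a * inverse (X / Y)) = a * Y^2 - inverse a * X^2"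
  using assms by (simp_all add: sig_def field_simps power2_eq_square)

definition ht_weight :: "complex \<Rightarrow> nat \<Rightarrow> vertex set \<Rightarrow> vertex set \<Rightarrow> vertex \<Rightarrow> xy_fun" where
  "ht_weight a m H V v x y =
    vweight a (vtype (ht_left m H (fst v) (snd v)) (ht_right m H (fst v) (snd v))
      (ht_up m V (fst v) (snd v)) (ht_down m V (fst v) (snd v))) (ht_param m x y (fst v) (snd v))"

definition ht_state_term :: "complex \<Rightarrow> nat \<Rightarrow> vertex set \<Rightarrow> vertex set \<Rightarrow> xy_fun" where
  "ht_state_term a m H V x y =
    xy_monomial (m+1) (ht_norm_exp m) (ht_norm_exp m) x y * (\<Prod>v\<in>ht_vert m. ht_weight a m H V v x y)"

text \<open>After multiplication by \<open>x\<^sub>i y\<^sub>j\<close> the weight of a vertex that is not a flip becomes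
  \<open>c x\<^sub>i\<^sup>2 - c\<^sup>-\<^sup>1 y\<^sub>j\<^sup>2\<close> with this leading coefficient \<open>c\<close>.\<close>

definition ht_lead_coeff :: "complex \<Rightarrow> nat \<Rightarrow> vertex set \<Rightarrow> vertex set \<Rightarrow> vertex \<Rightarrow> complex"
  where
  "ht_lead_coeff a m H V v =
    (if ht_right m H (fst v) (snd v) = ht_up m V (fst v) (snd v) then a else - inverse a)"

definition ht_top_coeff :: "complex \<Rightarrow> nat \<Rightarrow> vertex set \<Rightarrow> vertex set \<Rightarrow> complex" where
  "ht_top_coeff a m H V =
    sig (a^2) ^ card (ht_flips m H) * (\<Prod>v\<in>ht_vert m - ht_flips m H. ht_lead_coeff a m H V v)"

definition top_monomial :: "nat \<Rightarrow> (nat \<Rightarrow> complex) \<Rightarrow> complex" where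
  "top_monomial m x = (\<Prod>i=1..m. x i ^ (4*m)) * x (m+1) ^ (2*m)"

lemma Zt_HT_eq_sum_state_term:
  "Zt_HT a m x y = (\<Sum>(H,V)\<in>ht_states m. ht_state_term a m H V x y)"
proof -
  have "(\<Prod>i=1..m. x i ^ (2*m) * y i ^ (2*m)) = (\<Prod>i=1..m. x i ^ ht_norm_exp m i * y i ^ ht_norm_exp m i)"
    by (intro prod.cong refl) (auto simp: ht_norm_exp_def)
  then have "(\<Prod>i=1..m. x i ^ (2*m) * y i ^ (2*m)) * x (m+1) ^ m * y (m+1) ^ m
      = xy_monomial (m+1) (ht_norm_exp m) (ht_norm_exp m) x y"
    unfolding xy_monomial_def by (simp add: ht_norm_exp_def ac_simps)
  then show ?thesis
    unfolding Zt_HT_def Z_HT_def ht_state_term_def ht_weight_def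
    by (simp add: sum_distrib_left case_prod_beta)
qed

lemma ht_weight_flip:
  assumes "(H,V) \<in> ht_states m" "v \<in> ht_flips m H"
  shows "ht_weight a m H V v x y = sig (a^2)"
  using assms vweight_vtype[OF ht_states_vtype_neq_0[OF assms(1), of "fst v" "snd v"]]
  unfolding ht_weight_def ht_flips_def ht_flip_def by auto

lemma ht_weight_nonflip:
  assumes st: "(H,V) \<in> ht_states m" and v: "v \<in> ht_vert m - ht_flips m H"
    and nz: "nonzero_args (m+1) x y" and a: "a \<noteq> 0"
  defines "c \<equiv> ht_lead_coeff a m H V v" and "X \<equiv> x (ht_xindex m (fst v))" and "Y \<equiv> y (snd v)"
  shows "X * Y * ht_weight a m H V v x y = c * X^2 - inverse c * Y^2"
proof -
  have vv: "v \<in> ht_vert m" using v by simp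
  have "X \<noteq> 0" "Y \<noteq> 0"
    using nz ht_xindex_range[OF vv] ht_column_range[OF vv] unfolding X_def Y_def nonzero_args_def by auto
  moreover have "ht_param m x y (fst v) (snd v) = X / Y"
    unfolding ht_param_def X_def Y_def ht_xindex_def by (simp add: field_simps)
  moreover have "\<not> ht_flip m H (fst v) (snd v)" "v \<in> ht_vert m"
    using v unfolding ht_flips_def by auto
  ultimately show ?thesis
    using vweight_vtype[OF ht_states_vtype_neq_0[OF st, of "fst v" "snd v"]] mult_sig_ratio[OF a]
    unfolding ht_weight_def c_def ht_lead_coeff_def ht_flip_def by (auto simp: algebra_simps)
qed

lemma prod_x_xindex_nonflips:
  "(\<Prod>v\<in>ht_vert m - ht_flips m H. z (ht_xindex m (fst v))) = (\<Prod>i=1..m+1. z i ^ xblock_nonflips m H i)"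
proof -
  have "{v \<in> ht_vert m - ht_flips m H. ht_xindex m (fst v) = i} = ht_xblock m i - ht_flips m H" for i
    unfolding ht_xblock_def by auto
  then show ?thesis
    unfolding xblock_nonflips_def using ht_xindex_range finite_ht_vert
    by (subst prod_eq_prod_power_card_fibres[where I = "{1..m+1}"]) auto
qed

lemma prod_y_column_nonflips:
  "(\<Prod>v\<in>ht_vert m - ht_flips m H. z (snd v)) = (\<Prod>j=1..m+1. z j ^ column_nonflips m H j)"
proof -
  have "{v \<in> ht_vert m - ht_flips m H. snd v = j} = ht_column m j - ht_flips m H" for j
    unfolding ht_column_def by auto
  then show ?thesis
    unfolding column_nonflips_def using ht_column_range finite_ht_vert
    by (subst prod_eq_prod_power_card_fibres[where I = "{1..m+1}"]) auto
qed

lemma ht_state_term_eq: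
  assumes st: "(H,V) \<in> ht_states m" and nz: "nonzero_args (m+1) x y" and a: "a \<noteq> 0"
  shows "ht_state_term a m H V x y = sig (a^2) ^ card (ht_flips m H) *
    xy_monomial (m+1) (\<lambda>i. ht_norm_exp m i - xblock_nonflips m H i)
      (\<lambda>i. ht_norm_exp m i - column_nonflips m H i) x y *
    (\<Prod>v\<in>ht_vert m - ht_flips m H. ht_lead_coeff a m H V v * x (ht_xindex m (fst v))^2
       - inverse (ht_lead_coeff a m H V v) * y (snd v)^2)"
proof -
  let ?NF = "ht_vert m - ht_flips m H"
  have "ht_flips m H \<subseteq> ht_vert m" unfolding ht_flips_def by auto
  then have "(\<Prod>v\<in>ht_vert m. ht_weight a m H V v x y)
      = (\<Prod>v\<in>ht_flips m H. ht_weight a m H V v x y) * (\<Prod>v\<in>?NF. ht_weight a m H V v x y)"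
    using prod.subset_diff finite_ht_vert by (metis mult.commute)
  also have "(\<Prod>v\<in>ht_flips m H. ht_weight a m H V v x y) = sig (a^2) ^ card (ht_flips m H)"
    using ht_weight_flip[OF st] by simp
  finally have weights: "(\<Prod>v\<in>ht_vert m. ht_weight a m H V v x y)
      = sig (a^2) ^ card (ht_flips m H) * (\<Prod>v\<in>?NF. ht_weight a m H V v x y)" .
  have "xy_monomial (m+1) (ht_norm_exp m) (ht_norm_exp m) x y
      = xy_monomial (m+1) (\<lambda>i. ht_norm_exp m i - xblock_nonflips m H i)
          (\<lambda>i. ht_norm_exp m i - column_nonflips m H i) x y *
        ((\<Prod>i=1..m+1. x i ^ xblock_nonflips m H i) * (\<Prod>i=1..m+1. y i ^ column_nonflips m H i))"
    unfolding xy_monomial_def prod.distrib[symmetric]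
    using xblock_nonflips_le[OF st] column_nonflips_le[OF st]
    by (intro prod.cong refl) (simp add: power_add[symmetric] algebra_simps)
  also have "(\<Prod>i=1..m+1. x i ^ xblock_nonflips m H i) * (\<Prod>i=1..m+1. y i ^ column_nonflips m H i)
      = (\<Prod>v\<in>?NF. x (ht_xindex m (fst v)) * y (snd v))"
    by (simp add: prod.distrib prod_x_xindex_nonflips prod_y_column_nonflips)
  finally have norm: "xy_monomial (m+1) (ht_norm_exp m) (ht_norm_exp m) x y = 
      xy_monomial (m+1) (\<lambda>i. ht_norm_exp m i - xblock_nonflips m H i)
          (\<lambda>i. ht_norm_exp m i - column_nonflips m H i) x y *
      (\<Prod>v\<in>?NF. x (ht_xindex m (fst v)) * y (snd v))" .
  have "(\<Prod>v\<in>?NF. x (ht_xindex m (fst v)) * y (snd v)) * (\<Prod>v\<in>?NF. ht_weight a m H V v x y)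
      = (\<Prod>v\<in>?NF. ht_lead_coeff a m H V v * x (ht_xindex m (fst v))^2
           - inverse (ht_lead_coeff a m H V v) * y (snd v)^2)"
    unfolding prod.distrib[symmetric] using ht_weight_nonflip[OF st _ nz a] by (intro prod.cong refl) auto
  then show ?thesis
    unfolding ht_state_term_def weights norm by (simp add: ac_simps)
qed

lemma xdeg_norm_exp_minus_xblock_nonflips:
  assumes "(H,V) \<in> ht_states m"
  shows "xdeg (m+1) (\<lambda>i. ht_norm_exp m i - xblock_nonflips m H i) + card (ht_vert m - ht_flips m H)
    = 2*m*m + m"
proof -
  have "xdeg (m+1) (\<lambda>i. ht_norm_exp m i - xblock_nonflips m H i) + card (ht_vert m - ht_flips m H)
      = (\<Sum>i=1..m+1. ht_norm_exp m i - xblock_nonflips m H i + xblock_nonflips m H i)"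
    unfolding xdeg_def card_nonflips_eq_sum_xblock by (simp add: sum.distrib)
  also have "\<dots> = (\<Sum>i=1..m+1. ht_norm_exp m i)"
    using xblock_nonflips_le[OF assms] by (intro sum.cong refl) auto
  finally show ?thesis unfolding sum_ht_norm_exp .
qed

definition ht_lead_monomial :: "nat \<Rightarrow> vertex set \<Rightarrow> xy_fun" where
  "ht_lead_monomial m H = xy_monomial (m+1) (\<lambda>i. ht_norm_exp m i + xblock_nonflips m H i)
    (\<lambda>i. ht_norm_exp m i - column_nonflips m H i)"

lemma xdeg_ht_lead_monomial:
  "xdeg (m+1) (\<lambda>i. ht_norm_exp m i + xblock_nonflips m H i) = 2*m*m + m + card (ht_vert m - ht_flips m H)"
  unfolding xdeg_def card_nonflips_eq_sum_xblock sum_ht_norm_exp[symmetric] by (simp add: sum.distrib)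

lemma ht_lead_monomial_maximal:
  assumes "(H,V) \<in> ht_states m" "ht_maximal m H"
  shows "ht_lead_monomial m H x y = top_monomial m x"
proof -
  have "ht_lead_monomial m H x y = xy_monomial (m+1) (\<lambda>i. 2 * ht_norm_exp m i) (\<lambda>_. 0) x y"
    using assms column_nonflips_maximal[OF assms] unfolding ht_lead_monomial_def xy_monomial_def ht_maximal_def
    by (intro prod.cong refl) (simp add: mult_2)
  also have "(\<Prod>i=1..m. x i ^ (2 * ht_norm_exp m i) * y i ^ 0) = (\<Prod>i=1..m. x i ^ (4*m))"
    by (intro prod.cong refl) (simp add: ht_norm_exp_def)
  then have "xy_monomial (m+1) (\<lambda>i. 2 * ht_norm_exp m i) (\<lambda>_. 0) x y = top_monomial m x"
    unfolding xy_monomial_def top_monomial_def by (simp add: ht_norm_exp_def)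
  finally show ?thesis .
qed

lemma xy_monomial_mult_prod_lead:
  assumes st: "(H,V) \<in> ht_states m"
  shows "xy_monomial (m+1) (\<lambda>i. ht_norm_exp m i - xblock_nonflips m H i)
      (\<lambda>i. ht_norm_exp m i - column_nonflips m H i) x y
    * (\<Prod>v\<in>ht_vert m - ht_flips m H. c v * x (ht_xindex m (fst v))^2)
    = (\<Prod>v\<in>ht_vert m - ht_flips m H. c v) * ht_lead_monomial m H x y"
proof -
  let ?M = "xy_monomial (m+1) (\<lambda>i. ht_norm_exp m i - xblock_nonflips m H i)
    (\<lambda>i. ht_norm_exp m i - column_nonflips m H i) x y"
  have "(\<Prod>v\<in>ht_vert m - ht_flips m H. c v * x (ht_xindex m (fst v))^2)
      = (\<Prod>v\<in>ht_vert m - ht_flips m H. c v) * xy_monomial (m+1) (\<lambda>i. 2 * xblock_nonflips m H i) (\<lambda>_. 0) x y"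
    unfolding prod.distrib power_mult[symmetric] prod_x_xindex_nonflips[where z = "\<lambda>i. x i ^ 2"]
    by (simp add: xy_monomial_def mult.commute power_mult)
  then have "?M * (\<Prod>v\<in>ht_vert m - ht_flips m H. c v * x (ht_xindex m (fst v))^2)
      = (\<Prod>v\<in>ht_vert m - ht_flips m H. c v)
        * (?M * xy_monomial (m+1) (\<lambda>i. 2 * xblock_nonflips m H i) (\<lambda>_. 0) x y)"
    by (simp only: mult.left_commute)
  also have "?M * xy_monomial (m+1) (\<lambda>i. 2 * xblock_nonflips m H i) (\<lambda>_. 0) x y = ht_lead_monomial m H x y"
    unfolding xy_monomial_mult ht_lead_monomial_def
    unfolding xy_monomial_def using xblock_nonflips_le[OF st]
    by (intro prod.cong refl) (auto simp: add.commute)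
  finally show ?thesis .
qed

text \<open>Expanding the product of the binomials \<open>c x\<^sub>i\<^sup>2 - c\<^sup>-\<^sup>1 y\<^sub>j\<^sup>2\<close>, every term other
  than the product of the \<open>c x\<^sub>i\<^sup>2\<close> has smaller \<open>x\<close>-degree.\<close>

lemma poly_xdeg_state_term_minus_lead:
  assumes st: "(H,V) \<in> ht_states m" and a: "a \<noteq> 0"
  shows "poly_xdeg (m+1) (\<lambda>d. d < 4*m*m + 2*m)
    (\<lambda>x y. ht_state_term a m H V x y - ht_top_coeff a m H V * ht_lead_monomial m H x y)"
proof -
  let ?NF = "ht_vert m - ht_flips m H" and ?F = "sig (a^2) ^ card (ht_flips m H)"
  define c where "c = ht_lead_coeff a m H V"
  define ex where "ex i = ht_norm_exp m i - xblock_nonflips m H i" for i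
  define fy where "fy i = ht_norm_exp m i - column_nonflips m H i" for i
  define T where "T v x y = c v * x (ht_xindex m (fst v))^2" for v and x y :: "nat \<Rightarrow> complex"
  define L where "L v x y = - inverse (c v) * y (snd v)^2" for v and x y :: "nat \<Rightarrow> complex"
  have deg_ex: "xdeg (m+1) ex + card ?NF = 2*m*m + m"
    unfolding ex_def by (rule xdeg_norm_exp_minus_xblock_nonflips[OF st])
  have "poly_xdeg (m+1) (\<lambda>d. d < (\<Sum>v\<in>?NF. 2))
      (\<lambda>x y. (\<Prod>v\<in>?NF. T v x y + L v x y) - (\<Prod>v\<in>?NF. T v x y))"
    using ht_xindex_range ht_column_range unfolding T_def L_def
    by (intro poly_xdeg_prod_add_diff finite_Diff finite_ht_vert poly_xdeg_x_power poly_xdeg_y_power) auto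
  then have "poly_xdeg (m+1) (\<lambda>d. d < 4*m*m + 2*m)
      (\<lambda>x y. xy_monomial (m+1) ex fy x y * ((\<Prod>v\<in>?NF. T v x y + L v x y) - (\<Prod>v\<in>?NF. T v x y)))"
    by (rule poly_xdeg_mult[OF poly_xdeg_monomial[of "\<lambda>d. d = xdeg (m+1) ex" "m+1" ex fy, OF refl]])
      (use deg_ex card_nonflips_le[OF st] in auto)
  then have lower: "poly_xdeg (m+1) (\<lambda>d. d < 4*m*m + 2*m)
      (\<lambda>x y. ?F * (xy_monomial (m+1) ex fy x y * ((\<Prod>v\<in>?NF. T v x y + L v x y) - (\<Prod>v\<in>?NF. T v x y))))"
    by (rule poly_xdeg_cmult)
  have lead: "xy_monomial (m+1) ex fy x y * (\<Prod>v\<in>?NF. T v x y) = (\<Prod>v\<in>?NF. c v) * ht_lead_monomial m H x y"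
    for x y
    unfolding ex_def fy_def T_def by (rule xy_monomial_mult_prod_lead[OF st])
  show ?thesis
  proof (rule poly_xdeg_cong[OF lower])
    fix x y assume "nonzero_args (m+1) x y"
    then have "ht_state_term a m H V x y = ?F * xy_monomial (m+1) ex fy x y * (\<Prod>v\<in>?NF. T v x y + L v x y)"
      using ht_state_term_eq[OF st _ a] unfolding ex_def fy_def T_def L_def c_def by simp
    moreover have "ht_top_coeff a m H V * ht_lead_monomial m H x y
        = ?F * (xy_monomial (m+1) ex fy x y * (\<Prod>v\<in>?NF. T v x y))"
      unfolding lead ht_top_coeff_def c_def by (simp only: mult.assoc)
    ultimately show "?F * (xy_monomial (m+1) ex fy x y * ((\<Prod>v\<in>?NF. T v x y + L v x y) - (\<Prod>v\<in>?NF. T v x y)))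
        = ht_state_term a m H V x y - ht_top_coeff a m H V * ht_lead_monomial m H x y"
      by (simp only: right_diff_distrib mult.assoc)
  qed
qed

lemma poly_xdeg_state_term_minus_top:
  assumes st: "(H,V) \<in> ht_states m" and a: "a \<noteq> 0"
  shows "poly_xdeg (m+1) (\<lambda>d. d < 4*m*m + 2*m) (\<lambda>x y. ht_state_term a m H V x y
    - (if ht_maximal m H then ht_top_coeff a m H V * top_monomial m x else 0))"
proof (cases "ht_maximal m H")
  case True
  then show ?thesis
    using poly_xdeg_state_term_minus_lead[OF st a] by (simp add: ht_lead_monomial_maximal[OF st])
next
  case False
  then have "xdeg (m+1) (\<lambda>i. ht_norm_exp m i + xblock_nonflips m H i) < 4*m*m + 2*m"
    using xdeg_ht_lead_monomial card_nonflips_less_if_not_maximal[OF st] by simp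
  then have lead: "poly_xdeg (m+1) (\<lambda>d. d < 4*m*m + 2*m)
      (\<lambda>x y. ht_top_coeff a m H V * ht_lead_monomial m H x y)"
    unfolding ht_lead_monomial_def by (intro poly_xdeg_cmult poly_xdeg_monomial)
  show ?thesis
    by (rule poly_xdeg_cong[OF poly_xdeg_add[OF poly_xdeg_state_term_minus_lead[OF st a] lead]])
      (use False in simp)
qed

section \<open>Maximal states\<close>

text \<open>The maximal state whose flip in block \<open>i\<close> lies in column \<open>flip_col i\<close> of the upper row
  \<open>i\<close> or, for \<open>i \<in> B\<close>, of the lower row \<open>2m + 2 - i\<close>. All horizontal arrows point right except
  those to the right of a flip, which point left; the vertical arrows of column \<open>flip_col i\<close> point
  up above the flip and down below it, and those of column \<open>m + 1\<close> point down.\<close>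

locale top_config =
  fixes m :: nat and xs :: "nat list" and B :: "nat set"
  assumes xs: "xs \<in> permutations_of_set {1..m}" and B: "B \<subseteq> {1..m}"
begin

definition flip_col :: "nat \<Rightarrow> nat" where "flip_col i = xs ! (i - 1)"

definition flip_row :: "nat \<Rightarrow> nat" where "flip_row i = (if i \<in> B then 2*m+2-i else i)"

definition Htop :: "vertex set" where
  "Htop = {(r,j) \<in> ht_vert m. (r \<le> m \<and> (r \<in> B \<or> j < flip_col r)) \<or> r = m+1
      \<or> (m+2 \<le> r \<and> (2*m+2-r \<notin> B \<or> j < flip_col (2*m+2-r)))}"

definition Vtop :: "vertex set" where
  "Vtop = {(r,j)\<in>ht_vert m. 2 \<le> r \<and> j \<le> m \<and> (\<exists>i\<in>{1..m}. flip_col i = j \<and> r \<le> flip_row i)}"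

definition Dtop :: "vertex set" where
  "Dtop = (\<lambda>i. (flip_row i, flip_col i)) ` {1..m}"

lemma bij_betw_flip_col: "bij_betw flip_col {1..m} {1..m}"
proof -
  have "bij_betw (\<lambda>i. i - 1) {1..m} {..<m}"
    by (rule bij_betwI[where g = Suc]) auto
  moreover have "bij_betw ((!) xs) {..<m} {1..m}"
    using permutations_of_setD[OF xs] length_finite_permutations_of_set[OF xs]
    by (intro bij_betw_nth) auto
  ultimately have "bij_betw ((!) xs \<circ> (\<lambda>i. i - 1)) {1..m} {1..m}"
    by (rule bij_betw_trans)
  then show ?thesis by (simp add: flip_col_def[abs_def] comp_def)
qed

lemma flip_col_range: "i \<in> {1..m} \<Longrightarrow> flip_col i \<in> {1..m}"
  using bij_betwE[OF bij_betw_flip_col] by blast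

lemma flip_col_inj: "i \<in> {1..m} \<Longrightarrow> k \<in> {1..m} \<Longrightarrow> flip_col i = flip_col k \<Longrightarrow> i = k"
  using bij_betw_imp_inj_on[OF bij_betw_flip_col] by (auto dest: inj_onD)

lemma flip_col_surj: "j \<in> {1..m} \<Longrightarrow> \<exists>i\<in>{1..m}. flip_col i = j"
  using bij_betw_imp_surj_on[OF bij_betw_flip_col] by (metis imageE)

lemma flip_row_range: "i \<in> {1..m} \<Longrightarrow> 1 \<le> flip_row i \<and> flip_row i \<le> 2*m+1"
  unfolding flip_row_def by auto

lemma xindex_flip_row: "i \<in> {1..m} \<Longrightarrow> ht_xindex m (flip_row i) = i"
  unfolding flip_row_def ht_xindex_def by auto

lemma ht_right_Htop: "(r,j) \<in> ht_vert m \<Longrightarrow> ht_right m Htop r j =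
    ((r \<le> m \<and> (r \<in> B \<or> j < flip_col r)) \<or> r = m+1
      \<or> (m+2 \<le> r \<and> (2*m+2-r \<notin> B \<or> j < flip_col (2*m+2-r))))"
  unfolding ht_right_def Htop_def by auto

lemma ht_left_Htop: assumes v: "(r,j) \<in> ht_vert m" shows "ht_left m Htop r j =
    ((r \<le> m \<and> (r \<in> B \<or> j \<le> flip_col r)) \<or> r = m+1
      \<or> (m+2 \<le> r \<and> (2*m+2-r \<notin> B \<or> j \<le> flip_col (2*m+2-r))))"
proof (cases "j = 1")
  case True
  have "r \<le> m \<Longrightarrow> 1 \<le> flip_col r" using v flip_col_range[of r] by (auto simp: mem_ht_vert_iff)
  moreover have "m+2 \<le> r \<Longrightarrow> 1 \<le> flip_col (2*m+2-r)"
  proof -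
    assume "m+2 \<le> r"
    then have "2*m+2-r \<in> {1..m}" using v by (auto simp: mem_ht_vert_iff)
    then show ?thesis using flip_col_range by auto
  qed
  ultimately show ?thesis using True v by (cases "r \<le> m"; cases "r = m+1") (auto simp: ht_left_def mem_ht_vert_iff)
next
  case False
  then have v': "(r,j-1) \<in> ht_vert m" using v by (auto simp: mem_ht_vert_iff)
  have "ht_left m Htop r j = ht_right m Htop r (j-1)" using False by (simp add: ht_left_def ht_right_def)
  then show ?thesis unfolding ht_right_Htop[OF v'] using False v by (auto simp: mem_ht_vert_iff)
qed

lemma mem_Vtop_flip_col:
  "k \<in> {1..m} \<Longrightarrow> 1 \<le> r \<Longrightarrow> r \<le> 2*m+1 \<Longrightarrow> (r, flip_col k) \<in> Vtop \<longleftrightarrow> 2 \<le> r \<and> r \<le> flip_row k"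
proof -
  assume k: "k \<in> {1..m}" and r: "1 \<le> r" "r \<le> 2*m+1"
  have eqv: "\<And>i. i \<in> {1..m} \<Longrightarrow> flip_col i = flip_col k \<longleftrightarrow> i = k" using flip_col_inj k by blast
  have "(r, flip_col k) \<in> ht_vert m" using flip_col_range[OF k] r by (auto simp: mem_ht_vert_iff)
  moreover have "flip_col k \<le> m" using flip_col_range[OF k] by simp
  ultimately show ?thesis unfolding Vtop_def using eqv k by auto
qed

lemma ht_up_Vtop:
  "k \<in> {1..m} \<Longrightarrow> 1 \<le> r \<Longrightarrow> r \<le> 2*m+1 \<Longrightarrow> ht_up m Vtop r (flip_col k) = (r \<le> flip_row k)"
  using mem_Vtop_flip_col[of k r] flip_row_range[of k] unfolding ht_up_def by auto

lemma ht_down_Vtop: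
  "k \<in> {1..m} \<Longrightarrow> 1 \<le> r \<Longrightarrow> r \<le> 2*m+1 \<Longrightarrow> ht_down m Vtop r (flip_col k) = (flip_row k \<le> r)"
  using mem_Vtop_flip_col[of k "r+1"] flip_row_range[of k] unfolding ht_down_def by auto

lemma ht_up_Vtop_last: "m+2 \<le> r \<Longrightarrow> ht_up m Vtop r (m+1) = False"
  unfolding ht_up_def Vtop_def by auto

lemma ht_down_Vtop_last: "ht_down m Vtop r (m+1) = True"
  unfolding ht_down_def Vtop_def by auto

lemma ht_vert_cases:
  assumes "(r,j) \<in> ht_vert m"
  obtains (last_column) "j = m+1" "m+2 \<le> r" "r \<le> 2*m+1"
    | (column) k where "k \<in> {1..m}" "j = flip_col k" "1 \<le> r" "r \<le> 2*m+1"
  using assms flip_col_surj[of j] by (auto simp: mem_ht_vert_iff)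

lemma mem_Dtop_iff: "(r,j) \<in> Dtop \<longleftrightarrow> (\<exists>k\<in>{1..m}. r = flip_row k \<and> j = flip_col k)"
  unfolding Dtop_def by auto

lemma Dtop_subset: "Dtop \<subseteq> ht_vert m"
  unfolding Dtop_def using flip_row_range flip_col_range by (auto simp: mem_ht_vert_iff)

lemma ht_flip_Htop_iff:
  assumes v: "(r,j) \<in> ht_vert m"
  shows "ht_flip m Htop r j \<longleftrightarrow> (r,j) \<in> Dtop"
proof -
  have eq: "ht_flip m Htop r j \<longleftrightarrow>
      (r \<le> m \<and> r \<notin> B \<and> j = flip_col r) \<or> (m+2 \<le> r \<and> 2*m+2-r \<in> B \<and> j = flip_col (2*m+2-r))"
    unfolding ht_flip_def ht_left_Htop[OF v] ht_right_Htop[OF v] by auto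
  show ?thesis
  proof
    assume "ht_flip m Htop r j"
    then consider "r \<le> m" "r \<notin> B" "j = flip_col r"
      | "m+2 \<le> r" "2*m+2-r \<in> B" "j = flip_col (2*m+2-r)"
      using eq by auto
    then show "(r,j) \<in> Dtop"
    proof cases
      case 1
      then show ?thesis
        using v unfolding mem_Dtop_iff by (intro bexI[of _ r]) (auto simp: flip_row_def mem_ht_vert_iff)
    next
      case 2
      then show ?thesis
        using v unfolding mem_Dtop_iff by (intro bexI[of _ "2*m+2-r"]) (auto simp: flip_row_def mem_ht_vert_iff)
    qed
  next
    assume "(r,j) \<in> Dtop"
    then obtain k where k: "k \<in> {1..m}" "r = flip_row k" "j = flip_col k"
      unfolding mem_Dtop_iff by auto
    show "ht_flip m Htop r j"
      unfolding eq using k by (cases "k \<in> B") (auto simp: flip_row_def)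
  qed
qed

lemma ht_flips_Htop: "ht_flips m Htop = Dtop"
  unfolding ht_flips_def using Dtop_subset ht_flip_Htop_iff by auto

lemma vertex_type_Dtop:
  assumes "(r,j) \<in> Dtop"
  shows "ht_left m Htop r j \<and> \<not> ht_right m Htop r j \<and> ht_up m Vtop r j \<and> ht_down m Vtop r j"
proof -
  obtain k where k: "k \<in> {1..m}" "r = flip_row k" "j = flip_col k"
    using assms unfolding mem_Dtop_iff by auto
  have v: "(r,j) \<in> ht_vert m" using assms Dtop_subset by auto
  have "ht_up m Vtop r j" "ht_down m Vtop r j"
    using ht_up_Vtop[OF k(1)] ht_down_Vtop[OF k(1)] flip_row_range[OF k(1)] k by auto
  moreover have "ht_left m Htop r j \<and> \<not> ht_right m Htop r j"
    using ht_left_Htop[OF v] ht_right_Htop[OF v] k by (cases "k \<in> B") (auto simp: flip_row_def)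
  ultimately show ?thesis by simp
qed

lemma vtype_Htop_Vtop_neq_0:
  assumes v: "(r,j) \<in> ht_vert m"
  shows "vtype (ht_left m Htop r j) (ht_right m Htop r j) (ht_up m Vtop r j) (ht_down m Vtop r j) \<noteq> 0"
  using v
proof (cases rule: ht_vert_cases)
  case last_column
  define i where "i = 2*m+2-r"
  have i: "i \<in> {1..m}" using last_column unfolding i_def atLeastAtMost_iff by arith
  then have "flip_col i \<le> m" using flip_col_range by auto
  then have "ht_left m Htop r (m+1) = (i \<notin> B)" "ht_right m Htop r (m+1) = (i \<notin> B)"
    using ht_left_Htop[OF v] ht_right_Htop[OF v] last_column unfolding i_def[symmetric] by auto
  then show ?thesis
    unfolding vtype_neq_0_iff last_column(1) using ht_up_Vtop_last[OF last_column(2)] ht_down_Vtop_last by simp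
next
  case (column k)
  show ?thesis
  proof (cases "(r,j) \<in> Dtop")
    case True
    then show ?thesis using vertex_type_Dtop unfolding vtype_neq_0_iff by blast
  next
    case False
    then have "\<not> ht_flip m Htop r j" using ht_flip_Htop_iff[OF v] by simp
    moreover have "r \<noteq> flip_row k" using False column unfolding mem_Dtop_iff by auto
    ultimately show ?thesis
      unfolding vtype_neq_0_iff ht_flip_def column(2) ht_up_Vtop[OF column(1,3,4)] ht_down_Vtop[OF column(1,3,4)]
      by auto
  qed
qed

lemma Htop_subset: "Htop \<subseteq> ht_vert m"
  unfolding Htop_def by (rule subsetI) (simp add: case_prod_beta)

lemma Vtop_subset: "Vtop \<subseteq> {v \<in> ht_vert m. 2 \<le> fst v}"
  unfolding Vtop_def by (rule subsetI) (simp add: case_prod_beta)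

lemma Htop_Vtop_in_ht_states:
  assumes "m \<ge> 1"
  shows "(Htop, Vtop) \<in> ht_states m"
proof -
  have "(m+1, m) \<in> Htop" "(m+2, m+1) \<notin> Vtop"
    using assms unfolding Htop_def Vtop_def by (simp_all add: mem_ht_vert_iff)
  moreover have "(r, m) \<in> Htop \<longleftrightarrow> (2*m+2-r, m+1) \<notin> Htop" if r: "r \<in> {1..m}" for r
  proof -
    have "flip_col r \<le> m" using flip_col_range[OF r] by simp
    then have "(r, m) \<in> Htop \<longleftrightarrow> r \<in> B" "(2*m+2-r, m+1) \<in> Htop \<longleftrightarrow> r \<notin> B"
      using r unfolding Htop_def by (auto simp: mem_ht_vert_iff)
    then show ?thesis by simp
  qed
  ultimately show ?thesis
    using Htop_subset Vtop_subset vtype_Htop_Vtop_neq_0 unfolding ht_states_def by auto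
qed

lemma xblock_Int_Dtop:
  assumes "i \<in> {1..m+1}"
  shows "ht_xblock m i \<inter> Dtop = (if i \<le> m then {(flip_row i, flip_col i)} else {})"
proof -
  have "v \<in> Dtop \<longleftrightarrow> i \<le> m \<and> v = (flip_row i, flip_col i)" if v: "v \<in> ht_xblock m i" for v
  proof
    assume "v \<in> Dtop"
    then obtain k where k: "k \<in> {1..m}" "v = (flip_row k, flip_col k)" unfolding Dtop_def by auto
    then have "k = i" using v xindex_flip_row[OF k(1)] unfolding ht_xblock_def by auto
    then show "i \<le> m \<and> v = (flip_row i, flip_col i)" using k by simp
  next
    assume "i \<le> m \<and> v = (flip_row i, flip_col i)"
    then show "v \<in> Dtop" using assms unfolding Dtop_def by auto
  qed
  moreover have "(flip_row i, flip_col i) \<in> ht_xblock m i" if "i \<le> m"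
    using that assms Dtop_subset xindex_flip_row[of i] unfolding ht_xblock_def Dtop_def by auto
  ultimately show ?thesis by auto
qed

lemma ht_maximal_Htop: "ht_maximal m Htop"
  unfolding ht_maximal_def
  using xblock_nonflips_eq_iff xblock_Int_Dtop by (simp add: ht_flips_Htop)

end

lemma ht_H_eq_if_flips_eq:
  assumes "H \<subseteq> ht_vert m" "H' \<subseteq> ht_vert m" and F: "ht_flips m H = ht_flips m H'"
  shows "H = H'"
proof -
  have "(r,j) \<in> H \<longleftrightarrow> (r,j) \<in> H'" if "(r,j) \<in> ht_vert m" for r j
    using that
  proof (induction j arbitrary: r)
    case (Suc j)
    have "ht_left m H r (Suc j) = ht_left m H' r (Suc j)"
      using Suc by (cases "j = 0") (auto simp: ht_left_def mem_ht_vert_iff)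
    moreover have "(r, Suc j) \<in> ht_flips m H \<longleftrightarrow> (r, Suc j) \<in> ht_flips m H'" using F by simp
    then have "ht_flip m H r (Suc j) = ht_flip m H' r (Suc j)"
      using Suc.prems unfolding ht_flips_def by simp
    ultimately show ?case unfolding ht_flip_def ht_right_def by blast
  qed (simp add: mem_ht_vert_iff)
  with assms(1,2) show ?thesis by auto
qed

lemma ht_states_up_eq:
  assumes st: "(H,V) \<in> ht_states m" and st': "(H,V') \<in> ht_states m"
  shows "(r,j) \<in> ht_vert m \<Longrightarrow> ht_up m V r j = ht_up m V' r j"
proof (induction r arbitrary: j)
  case (Suc r)
  show ?case
  proof (cases "(r,j) \<in> ht_vert m")
    case True
    have "ht_down m V r j = ht_down m V' r j"
      using Suc.IH[OF True] ht_states_not_flip_iff[OF st True] ht_states_not_flip_iff[OF st' True] by blast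
    moreover have "r \<noteq> 2*m+1" using Suc.prems by (auto simp: mem_ht_vert_iff)
    ultimately show ?thesis by (simp add: ht_down_def ht_up_def)
  next
    case False
    then have "r = 0 \<or> (j = m+1 \<and> Suc r = m+2)" using Suc.prems by (auto simp: mem_ht_vert_iff)
    moreover have "(m+2, m+1) \<in> V \<longleftrightarrow> (m+2, m+1) \<in> V'"
      using st st' unfolding ht_states_def by auto
    ultimately show ?thesis by (auto simp: ht_up_def)
  qed
qed (simp add: mem_ht_vert_iff)

lemma ht_states_V_eq:
  assumes st: "(H,V) \<in> ht_states m" and st': "(H,V') \<in> ht_states m"
  shows "V = V'"
proof -
  have "V \<subseteq> {v \<in> ht_vert m. 2 \<le> fst v}" "V' \<subseteq> {v \<in> ht_vert m. 2 \<le> fst v}"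
    using st st' unfolding ht_states_def by auto
  moreover have "(r,j) \<in> V \<longleftrightarrow> (r,j) \<in> V'" if "(r,j) \<in> ht_vert m" "2 \<le> r" for r j
    using ht_states_up_eq[OF st st' that(1)] that(2) by (simp add: ht_up_def)
  ultimately show ?thesis by auto
qed

lemma top_config_Dtop_inj:
  assumes p: "top_config m xs B" and p': "top_config m xs' B'"
    and eq: "top_config.Dtop m xs B = top_config.Dtop m xs' B'"
  shows "xs = xs' \<and> B = B'"
proof -
  have same: "top_config.flip_row m B i = top_config.flip_row m B' i
      \<and> top_config.flip_col xs i = top_config.flip_col xs' i" if i: "i \<in> {1..m}" for i
  proof -
    have "(top_config.flip_row m B i, top_config.flip_col xs i) \<in> top_config.Dtop m xs' B'"
      using i eq unfolding top_config.Dtop_def[OF p] by auto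
    then obtain k where k: "k \<in> {1..m}" "top_config.flip_row m B i = top_config.flip_row m B' k"
      "top_config.flip_col xs i = top_config.flip_col xs' k"
      unfolding top_config.Dtop_def[OF p'] by auto
    have "i = k" using top_config.xindex_flip_row[OF p i] top_config.xindex_flip_row[OF p' k(1)] k(2) by simp
    then show ?thesis using k by simp
  qed
  have len: "length xs = m" "length xs' = m"
    using length_finite_permutations_of_set[of xs "{1..m}"] length_finite_permutations_of_set[of xs' "{1..m}"]
      p p' unfolding top_config_def by auto
  have "xs = xs'"
  proof (rule nth_equalityI)
    fix n assume "n < length xs"
    then have "Suc n \<in> {1..m}" using len by simp
    then show "xs ! n = xs' ! n"
      using same unfolding top_config.flip_col_def[OF p] top_config.flip_col_def[OF p'] by fastforce
  qed (simp add: len)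
  moreover have "B = B'"
  proof -
    have "i \<in> B \<longleftrightarrow> i \<in> B'" if "i \<in> {1..m}" for i
      using same[OF that] that unfolding top_config.flip_row_def[OF p] top_config.flip_row_def[OF p']
      by (auto split: if_splits)
    then show ?thesis using p p' unfolding top_config_def by blast
  qed
  ultimately show ?thesis by simp
qed

lemma maximal_flip_counts:
  assumes st: "(H,V) \<in> ht_states m" and mx: "ht_maximal m H"
  shows "i \<in> {1..m} \<Longrightarrow> card (ht_xblock m i \<inter> ht_flips m H) = 1"
    and "ht_xblock m (m+1) \<inter> ht_flips m H = {}"
    and "j \<in> {1..m} \<Longrightarrow> card (ht_column m j \<inter> ht_flips m H) = 1"
    and "ht_column m (m+1) \<inter> ht_flips m H = {}"
proof -
  have x: "card (ht_xblock m i \<inter> ht_flips m H) = (if i \<le> m then 1 else 0)" if "i \<in> {1..m+1}" for i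
    using mx that xblock_nonflips_eq_iff unfolding ht_maximal_def by blast
  have y: "card (ht_column m j \<inter> ht_flips m H) = (if j \<le> m then 1 else 0)" if "j \<in> {1..m+1}" for j
    using column_nonflips_maximal[OF st mx that] column_nonflips_eq_iff[OF that] by blast
  show "i \<in> {1..m} \<Longrightarrow> card (ht_xblock m i \<inter> ht_flips m H) = 1"
    and "j \<in> {1..m} \<Longrightarrow> card (ht_column m j \<inter> ht_flips m H) = 1"
    using x[of i] y[of j] by auto
  show "ht_xblock m (m+1) \<inter> ht_flips m H = {}" "ht_column m (m+1) \<inter> ht_flips m H = {}"
    using x[of "m+1"] y[of "m+1"] finite_ht_xblock finite_ht_column by auto
qed

lemma maximal_flips_eq_image:
  assumes st: "(H,V) \<in> ht_states m" and mx: "ht_maximal m H"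
  obtains g where "\<And>i. i \<in> {1..m} \<Longrightarrow> g i \<in> ht_xblock m i"
    "bij_betw (\<lambda>i. snd (g i)) {1..m} {1..m}" "ht_flips m H = g ` {1..m}"
proof -
  let ?F = "ht_flips m H"
  note counts = maximal_flip_counts[OF st mx]
  have "\<forall>i\<in>{1..m}. \<exists>v. ht_xblock m i \<inter> ?F = {v}"
    using counts(1) by (simp add: card_1_singleton_iff)
  then obtain g where g: "\<And>i. i \<in> {1..m} \<Longrightarrow> ht_xblock m i \<inter> ?F = {g i}"
    by metis
  then have gF: "g i \<in> ?F" "g i \<in> ht_xblock m i" if "i \<in> {1..m}" for i
    using that by blast+
  have "?F \<subseteq> g ` {1..m}"
  proof
    fix v assume v: "v \<in> ?F"
    then have "v \<in> ht_xblock m (ht_xindex m (fst v))" "ht_xindex m (fst v) \<in> {1..m+1}"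
      using ht_xindex_range unfolding ht_flips_def ht_xblock_def by auto
    moreover have "ht_xindex m (fst v) \<noteq> m+1" using v counts(2) calculation(1) by auto
    ultimately show "v \<in> g ` {1..m}" using v g by fastforce
  qed
  then have F: "?F = g ` {1..m}" using gF by auto
  have col: "g i \<in> ht_column m (snd (g i)) \<inter> ?F" if "i \<in> {1..m}" for i
    using gF[OF that] unfolding ht_column_def ht_xblock_def by auto
  have range: "snd (g i) \<in> {1..m}" if i: "i \<in> {1..m}" for i
    using ht_column_range[of "g i" m] col[OF i] counts(4) unfolding ht_column_def by (cases "snd (g i) = m+1") auto
  have inj: "inj_on (\<lambda>i. snd (g i)) {1..m}"
  proof (rule inj_onI)
    fix i k assume i: "i \<in> {1..m}" and k: "k \<in> {1..m}" and eq: "snd (g i) = snd (g k)"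
    have "\<exists>w. ht_column m (snd (g i)) \<inter> ?F = {w}"
      using counts(3)[OF range[OF i]] by (simp add: card_1_singleton_iff)
    then obtain w where w: "ht_column m (snd (g i)) \<inter> ?F = {w}" by blast
    moreover have "g k \<in> ht_column m (snd (g i)) \<inter> ?F" using col[OF k] eq by simp
    ultimately have "g i = g k" using col[OF i] by (metis singletonD)
    then show "i = k" using gF(2)[OF i] gF(2)[OF k] unfolding ht_xblock_def by auto
  qed
  then have "bij_betw (\<lambda>i. snd (g i)) {1..m} {1..m}"
    using range card_image[OF inj] by (intro bij_betw_imageI card_subset_eq) (auto simp: image_subset_iff)
  with gF(2) F show ?thesis using that by blast
qed

lemma top_config_exists:
  assumes g: "\<And>i. i \<in> {1..m} \<Longrightarrow> g i \<in> ht_xblock m i"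
    and col: "bij_betw (\<lambda>i. snd (g i)) {1..m} {1..m}"
  obtains xs B where "top_config m xs B" "top_config.Dtop m xs B = g ` {1..m}"
proof -
  define xs where "xs = map (\<lambda>i. snd (g i)) [1..<m+1]"
  define B where "B = {i \<in> {1..m}. fst (g i) \<noteq> i}"
  have "set [1..<m+1] = {1..m}" by auto
  then have "xs \<in> permutations_of_set {1..m}"
    using col unfolding xs_def bij_betw_def
    by (intro permutations_of_setI) (simp_all only: set_map distinct_map distinct_upt)
  then have P: "top_config m xs B"
    unfolding top_config_def B_def by auto
  have flip_col: "top_config.flip_col xs i = snd (g i)" if i: "i \<in> {1..m}" for i
  proof -
    have "top_config.flip_col xs i = xs ! (i - 1)" by (rule top_config.flip_col_def[OF P])
    also have "\<dots> = snd (g ([1..<m+1] ! (i - 1)))" unfolding xs_def using i by (intro nth_map) auto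
    also have "[1..<m+1] ! (i - 1) = i" using i nth_upt[of 1 "i - 1" "m+1"] by (auto simp del: upt_Suc)
    finally show ?thesis .
  qed
  have flip_row: "top_config.flip_row m B i = fst (g i)" if i: "i \<in> {1..m}" for i
  proof -
    obtain r j where rj: "g i = (r,j)" by fastforce
    have "1 \<le> r" "r \<le> 2*m+1" "min r (2*m+2-r) = i"
      using g[OF i] rj by (auto simp: ht_xblock_def mem_ht_vert_iff ht_xindex_def)
    then show ?thesis
      using i rj unfolding top_config.flip_row_def[OF P] by (auto simp: B_def)
  qed
  have "top_config.Dtop m xs B = (\<lambda>i. (fst (g i), snd (g i))) ` {1..m}"
    unfolding top_config.Dtop_def[OF P] using flip_col flip_row by (intro image_cong refl) simp
  then show ?thesis using P that by simp
qed

definition top_state :: "nat \<Rightarrow> nat list \<times> nat set \<Rightarrow> vertex set \<times> vertex set" where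
  "top_state m p = (top_config.Htop m (fst p) (snd p), top_config.Vtop m (fst p) (snd p))"

lemma maximal_state_eq_top_state:
  assumes st: "(H,V) \<in> ht_states m" and mx: "ht_maximal m H" and m: "m \<ge> 1"
  obtains p where "p \<in> permutations_of_set {1..m} \<times> Pow {1..m}" "(H,V) = top_state m p"
proof -
  obtain g where g: "\<And>i. i \<in> {1..m} \<Longrightarrow> g i \<in> ht_xblock m i"
    "bij_betw (\<lambda>i. snd (g i)) {1..m} {1..m}" "ht_flips m H = g ` {1..m}"
    using maximal_flips_eq_image[OF st mx] by blast
  obtain xs B where p: "top_config m xs B" and "top_config.Dtop m xs B = g ` {1..m}"
    using top_config_exists[OF g(1,2)] by blast
  with g(3) have F: "ht_flips m H = top_config.Dtop m xs B" by simp
  note st' = top_config.Htop_Vtop_in_ht_states[OF p m]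
  have "H \<subseteq> ht_vert m" using st unfolding ht_states_def by blast
  then have "H = top_config.Htop m xs B"
    by (rule ht_H_eq_if_flips_eq[OF _ top_config.Htop_subset[OF p]])
      (simp add: F top_config.ht_flips_Htop[OF p])
  moreover have "V = top_config.Vtop m xs B"
    using ht_states_V_eq[OF st] st' calculation by simp
  ultimately have "(H,V) = top_state m (xs, B)"
    unfolding top_state_def by simp
  moreover have "(xs, B) \<in> permutations_of_set {1..m} \<times> Pow {1..m}"
    using p unfolding top_config_def by auto
  ultimately show ?thesis using that by blast
qed

lemma bij_betw_top_state:
  assumes m: "m \<ge> 1"
  shows "bij_betw (top_state m) (permutations_of_set {1..m} \<times> Pow {1..m})
    {st \<in> ht_states m. ht_maximal m (fst st)}"
proof (rule bij_betw_imageI)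
  have P: "top_config m (fst p) (snd p)" if "p \<in> permutations_of_set {1..m} \<times> Pow {1..m}" for p
    using that unfolding top_config_def by auto
  show "inj_on (top_state m) (permutations_of_set {1..m} \<times> Pow {1..m})"
  proof (rule inj_onI)
    fix p q assume p: "p \<in> permutations_of_set {1..m} \<times> Pow {1..m}"
      and q: "q \<in> permutations_of_set {1..m} \<times> Pow {1..m}" and "top_state m p = top_state m q"
    then have "top_config.Htop m (fst p) (snd p) = top_config.Htop m (fst q) (snd q)"
      unfolding top_state_def by simp
    then have "top_config.Dtop m (fst p) (snd p) = top_config.Dtop m (fst q) (snd q)"
      using top_config.ht_flips_Htop[OF P[OF p]] top_config.ht_flips_Htop[OF P[OF q]] by metis
    then show "p = q" using top_config_Dtop_inj[OF P[OF p] P[OF q]] by (simp add: prod_eq_iff)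
  qed
  show "top_state m ` (permutations_of_set {1..m} \<times> Pow {1..m}) = {st \<in> ht_states m. ht_maximal m (fst st)}"
  proof (intro equalityI subsetI)
    fix st assume "st \<in> top_state m ` (permutations_of_set {1..m} \<times> Pow {1..m})"
    then obtain p where p: "p \<in> permutations_of_set {1..m} \<times> Pow {1..m}" "st = top_state m p" by blast
    then show "st \<in> {st \<in> ht_states m. ht_maximal m (fst st)}"
      using top_config.Htop_Vtop_in_ht_states[OF P[OF p(1)] m] top_config.ht_maximal_Htop[OF P[OF p(1)]]
      unfolding top_state_def by simp
  next
    fix st assume "st \<in> {st \<in> ht_states m. ht_maximal m (fst st)}"
    then obtain p where "p \<in> permutations_of_set {1..m} \<times> Pow {1..m}" "st = top_state m p"
      using maximal_state_eq_top_state[OF _ _ m, of "fst st" "snd st"] by auto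
    then show "st \<in> top_state m ` (permutations_of_set {1..m} \<times> Pow {1..m})" by blast
  qed
qed

section \<open>The top coefficient\<close>

lemma prod_ht_vert:
  fixes g :: "vertex \<Rightarrow> 'a::comm_monoid_mult"
  shows "(\<Prod>v\<in>ht_vert m. g v) =
    (\<Prod>i=1..m. (\<Prod>j=1..m. g (i,j)) * (\<Prod>j=1..m. g (2*m+2-i,j)) * g (2*m+2-i, m+1)) * (\<Prod>j=1..m. g (m+1,j))"
proof -
  have row: "(\<Prod>v\<in>{r} \<times> A. g v) = (\<Prod>j\<in>A. g (r,j))" for r A
  proof -
    have "{r} \<times> A = Pair r ` A" "inj_on (Pair r) A" by (auto simp: inj_on_def)
    then show ?thesis by (simp add: prod.reindex)
  qed
  have "(\<Prod>v\<in>ht_vert m. g v) = (\<Prod>i=1..m+1. \<Prod>v\<in>ht_xblock m i. g v)"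
    unfolding ht_xblock_def using finite_ht_vert ht_xindex_range by (intro prod.group[symmetric]) auto
  also have "\<dots> = (\<Prod>i=1..m. \<Prod>v\<in>ht_xblock m i. g v) * (\<Prod>j=1..m. g (m+1,j))"
    using ht_xblock_middle[of m] by (simp add: row)
  also have "(\<Prod>i=1..m. \<Prod>v\<in>ht_xblock m i. g v)
      = (\<Prod>i=1..m. (\<Prod>j=1..m. g (i,j)) * (\<Prod>j=1..m. g (2*m+2-i,j)) * g (2*m+2-i, m+1))"
  proof (rule prod.cong[OF refl])
    fix i assume i: "i \<in> {1..m}"
    then have "(\<Prod>v\<in>ht_xblock m i. g v) = (\<Prod>v\<in>{i} \<times> {1..m}. g v) * (\<Prod>v\<in>{2*m+2-i} \<times> {1..m+1}. g v)"
      unfolding ht_xblock_low[OF i] by (intro prod.union_disjoint) auto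
    then show "(\<Prod>v\<in>ht_xblock m i. g v) = (\<Prod>j=1..m. g (i,j)) * (\<Prod>j=1..m. g (2*m+2-i,j)) * g (2*m+2-i, m+1)"
      unfolding row by (simp add: mult.assoc)
  qed
  finally show ?thesis .
qed

context top_config
begin

text \<open>The factor of \<^const>\<open>ht_top_coeff\<close> at a vertex of the state \<open>(Htop, Vtop)\<close> is
  \<open>vertex_coeff\<close>. Its value at the vertex of block \<open>i\<close> in column \<open>m + 1\<close>, and at the vertex of the
  middle row in column \<open>flip_col i\<close>, is \<open>side_coeff i\<close>; its product over the two vertices of
  block \<open>i\<close> in column \<open>flip_col k\<close> is \<open>column_pair_coeff i k\<close>.\<close>

definition side_coeff :: "complex \<Rightarrow> nat \<Rightarrow> complex" where
  "side_coeff a k = (if k \<in> B then a else - inverse a)"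

definition pair_coeff :: "complex \<Rightarrow> nat \<Rightarrow> complex" where
  "pair_coeff a k = (if k \<in> B then a^2 else inverse a ^ 2)"

definition vertex_coeff :: "complex \<Rightarrow> vertex \<Rightarrow> complex" where
  "vertex_coeff a v = (if v \<in> Dtop then sig (a^2) else ht_lead_coeff a m Htop Vtop v)"

definition column_pair_coeff :: "complex \<Rightarrow> nat \<Rightarrow> nat \<Rightarrow> complex" where
  "column_pair_coeff a i k =
    (if k = i then sig (a^2) * side_coeff a i
     else if i < k then (if flip_col k < flip_col i then -1 else pair_coeff a i)
     else (if flip_col k < flip_col i then pair_coeff a k else -1))"

definition greater_count :: "nat \<Rightarrow> nat" where
  "greater_count i = card {k \<in> {1..m}. i < k \<and> flip_col i < flip_col k}"

lemma top_row_in_ht_vert: "i \<in> {1..m} \<Longrightarrow> k \<in> {1..m} \<Longrightarrow> (i, flip_col k) \<in> ht_vert m"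
  using flip_col_range[of k] by (auto simp: mem_ht_vert_iff)

lemma bottom_row_in_ht_vert: "i \<in> {1..m} \<Longrightarrow> k \<in> {1..m} \<Longrightarrow> (2*m+2-i, flip_col k) \<in> ht_vert m"
  using flip_col_range[of k] by (auto simp: mem_ht_vert_iff)

lemma lead_coeff_top_row:
  assumes i: "i \<in> {1..m}" and k: "k \<in> {1..m}"
  shows "ht_lead_coeff a m Htop Vtop (i, flip_col k)
    = (if (i \<in> B \<or> flip_col k < flip_col i) = (i \<le> flip_row k) then a else - inverse a)"
proof -
  have "ht_right m Htop i (flip_col k) = (i \<in> B \<or> flip_col k < flip_col i)"
    using ht_right_Htop[OF top_row_in_ht_vert[OF i k]] i by simp
  moreover have "ht_up m Vtop i (flip_col k) = (i \<le> flip_row k)"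
    using ht_up_Vtop[OF k, of i] i by simp
  ultimately show ?thesis unfolding ht_lead_coeff_def by simp
qed

lemma lead_coeff_bottom_row:
  assumes i: "i \<in> {1..m}" and k: "k \<in> {1..m}"
  shows "ht_lead_coeff a m Htop Vtop (2*m+2-i, flip_col k)
    = (if (i \<notin> B \<or> flip_col k < flip_col i) = (2*m+2-i \<le> flip_row k) then a else - inverse a)"
proof -
  have "2*m+2-(2*m+2-i) = i" "\<not> 2*m+2-i \<le> m" "2*m+2-i \<noteq> m+1" "m+2 \<le> 2*m+2-i" using i by auto
  then have "ht_right m Htop (2*m+2-i) (flip_col k) = (i \<notin> B \<or> flip_col k < flip_col i)"
    using ht_right_Htop[OF bottom_row_in_ht_vert[OF i k]] by simp
  moreover have "1 \<le> 2*m+2-i" "2*m+2-i \<le> 2*m+1" using i by auto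
  then have "ht_up m Vtop (2*m+2-i) (flip_col k) = (2*m+2-i \<le> flip_row k)"
    by (rule ht_up_Vtop[OF k])
  ultimately show ?thesis unfolding ht_lead_coeff_def by simp
qed

lemma vertex_coeff_middle:
  assumes k: "k \<in> {1..m}"
  shows "vertex_coeff a (m+1, flip_col k) = side_coeff a k"
proof -
  have "(m+1, flip_col k) \<notin> Dtop"
    unfolding mem_Dtop_iff flip_row_def by auto
  moreover have "(m+1, flip_col k) \<in> ht_vert m"
    using flip_col_range[OF k] by (auto simp: mem_ht_vert_iff)
  moreover have "ht_up m Vtop (m+1) (flip_col k) = (k \<in> B)"
    using ht_up_Vtop[OF k, of "m+1"] k unfolding flip_row_def by auto
  ultimately show ?thesis
    using ht_right_Htop unfolding vertex_coeff_def ht_lead_coeff_def side_coeff_def by simp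
qed

lemma vertex_coeff_last:
  assumes i: "i \<in> {1..m}"
  shows "vertex_coeff a (2*m+2-i, m+1) = side_coeff a i"
proof -
  have "(2*m+2-i, m+1) \<notin> Dtop"
    using flip_col_range unfolding mem_Dtop_iff by fastforce
  moreover have v: "(2*m+2-i, m+1) \<in> ht_vert m" using i by (auto simp: mem_ht_vert_iff)
  moreover have "2*m+2-(2*m+2-i) = i" "\<not> 2*m+2-i \<le> m" "2*m+2-i \<noteq> m+1" "m+2 \<le> 2*m+2-i"
    "\<not> m+1 < flip_col i"
    using i flip_col_range[OF i] by auto
  ultimately show ?thesis
    using ht_right_Htop[OF v] ht_up_Vtop_last
    unfolding vertex_coeff_def ht_lead_coeff_def side_coeff_def by simp
qed

lemma mem_Dtop_top_row:
  assumes i: "i \<in> {1..m}" and k: "k \<in> {1..m}"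
  shows "(i, flip_col k) \<in> Dtop \<longleftrightarrow> k = i \<and> i \<notin> B"
proof
  assume "(i, flip_col k) \<in> Dtop"
  then obtain k' where k': "k' \<in> {1..m}" "i = flip_row k'" "flip_col k = flip_col k'"
    unfolding mem_Dtop_iff by auto
  then have "k = k'" using flip_col_inj[OF k] by blast
  then show "k = i \<and> i \<notin> B" using k' i unfolding flip_row_def by (auto split: if_splits)
qed (use i in \<open>auto simp: mem_Dtop_iff flip_row_def\<close>)

lemma mem_Dtop_bottom_row:
  assumes i: "i \<in> {1..m}" and k: "k \<in> {1..m}"
  shows "(2*m+2-i, flip_col k) \<in> Dtop \<longleftrightarrow> k = i \<and> i \<in> B"
proof
  assume "(2*m+2-i, flip_col k) \<in> Dtop"
  then obtain k' where k': "k' \<in> {1..m}" "2*m+2-i = flip_row k'" "flip_col k = flip_col k'"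
    unfolding mem_Dtop_iff by auto
  then have "k = k'" using flip_col_inj[OF k] by blast
  moreover have "k' \<in> B" using k'(1,2) i unfolding flip_row_def by (auto split: if_splits)
  moreover have "i = k'" using k'(1,2) i \<open>k' \<in> B\<close> unfolding flip_row_def by simp arith
  ultimately show "k = i \<and> i \<in> B" by simp
qed (use i in \<open>auto simp: mem_Dtop_iff flip_row_def\<close>)

lemma vertex_coeff_column_pair:
  assumes i: "i \<in> {1..m}" and k: "k \<in> {1..m}" and a: "a \<noteq> 0"
  shows "vertex_coeff a (i, flip_col k) * vertex_coeff a (2*m+2-i, flip_col k) = column_pair_coeff a i k"
proof -
  have top: "vertex_coeff a (i, flip_col k) = (if k = i \<and> i \<notin> B then sig (a^2)
      else if (i \<in> B \<or> flip_col k < flip_col i) = (i \<le> flip_row k) then a else - inverse a)"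
    unfolding vertex_coeff_def mem_Dtop_top_row[OF i k] lead_coeff_top_row[OF i k] ..
  have bottom: "vertex_coeff a (2*m+2-i, flip_col k) = (if k = i \<and> i \<in> B then sig (a^2)
      else if (i \<notin> B \<or> flip_col k < flip_col i) = (2*m+2-i \<le> flip_row k) then a else - inverse a)"
    unfolding vertex_coeff_def mem_Dtop_bottom_row[OF i k] lead_coeff_bottom_row[OF i k] ..
  show ?thesis
  proof (cases "k = i")
    case True
    then show ?thesis
      unfolding top bottom flip_row_def column_pair_coeff_def side_coeff_def using i by auto
  next
    case False
    then have "flip_col k \<noteq> flip_col i" using flip_col_inj[OF k i] by blast
    moreover have "(i \<le> flip_row k) = (k \<in> B \<or> i < k)" "(2*m+2-i \<le> flip_row k) = (k \<in> B \<and> k < i)"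
      using i k False unfolding flip_row_def by auto
    ultimately show ?thesis
      unfolding top bottom column_pair_coeff_def pair_coeff_def using False a
      by (cases "i < k"; cases "flip_col k < flip_col i"; cases "i \<in> B"; cases "k \<in> B")
        (simp_all add: power2_eq_square)
  qed
qed

lemma ht_top_coeff_eq_prod_vertex_coeff: "ht_top_coeff a m Htop Vtop = (\<Prod>v\<in>ht_vert m. vertex_coeff a v)"
proof -
  have "(\<Prod>v\<in>ht_vert m. vertex_coeff a v)
      = (\<Prod>v\<in>ht_vert m - Dtop. vertex_coeff a v) * (\<Prod>v\<in>Dtop. vertex_coeff a v)"
    using prod.subset_diff[OF Dtop_subset finite_ht_vert] by simp
  also have "(\<Prod>v\<in>Dtop. vertex_coeff a v) = sig (a^2) ^ card Dtop" unfolding vertex_coeff_def by simp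
  also have "(\<Prod>v\<in>ht_vert m - Dtop. vertex_coeff a v) = (\<Prod>v\<in>ht_vert m - Dtop. ht_lead_coeff a m Htop Vtop v)"
    unfolding vertex_coeff_def by (intro prod.cong refl) auto
  finally show ?thesis unfolding ht_top_coeff_def ht_flips_Htop by (simp add: mult.commute)
qed

lemma column_pair_coeff_swap:
  assumes i: "i \<in> {1..m}" and k: "k \<in> {1..m}" and ik: "i < k"
  shows "column_pair_coeff a i k * column_pair_coeff a k i = (if flip_col i < flip_col k then pair_coeff a i ^ 2 else 1)"
proof -
  have "flip_col k \<noteq> flip_col i" using flip_col_inj[OF k i] ik by auto
  then show ?thesis unfolding column_pair_coeff_def using ik by (auto simp: power2_eq_square)
qed

lemma side_pair_coeff_power:
  "a \<noteq> 0 \<Longrightarrow> side_coeff a i ^ 3 * (pair_coeff a i ^ 2) ^ n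
    = (if i \<in> B then a^(4*n+3) else - (inverse a ^ (4*n+3)))"
  unfolding side_coeff_def pair_coeff_def
  by (auto simp: power_mult[symmetric] power_add[symmetric] mult.commute add.commute)

lemma prod_vertex_coeff_row_pair:
  assumes i: "i \<in> {1..m}" and a: "a \<noteq> 0"
  shows "(\<Prod>j=1..m. vertex_coeff a (i,j)) * (\<Prod>j=1..m. vertex_coeff a (2*m+2-i,j))
    = (\<Prod>k=1..m. column_pair_coeff a i k)"
proof -
  have "(\<Prod>j=1..m. vertex_coeff a (i,j)) * (\<Prod>j=1..m. vertex_coeff a (2*m+2-i,j))
      = (\<Prod>j=1..m. vertex_coeff a (i,j) * vertex_coeff a (2*m+2-i,j))"
    by (simp add: prod.distrib)
  also have "\<dots> = (\<Prod>k=1..m. vertex_coeff a (i,flip_col k) * vertex_coeff a (2*m+2-i,flip_col k))"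
    using prod.reindex_bij_betw[OF bij_betw_flip_col, of "\<lambda>j. vertex_coeff a (i,j) * vertex_coeff a (2*m+2-i,j)"]
    by simp
  also have "\<dots> = (\<Prod>k=1..m. column_pair_coeff a i k)"
    using vertex_coeff_column_pair[OF i _ a] by (intro prod.cong refl) auto
  finally show ?thesis .
qed

lemma prod_vertex_coeff_middle_row: "(\<Prod>j=1..m. vertex_coeff a (m+1,j)) = (\<Prod>k=1..m. side_coeff a k)"
  using prod.reindex_bij_betw[OF bij_betw_flip_col, of "\<lambda>j. vertex_coeff a (m+1,j)"] vertex_coeff_middle
  by simp

lemma prod_column_pair_coeff_offdiag:
  "(\<Prod>i\<in>{1..m}. \<Prod>k\<in>{1..m}-{i}. column_pair_coeff a i k) = (\<Prod>i=1..m. (pair_coeff a i ^ 2) ^ greater_count i)"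
proof -
  have "(\<Prod>i\<in>{1..m}. \<Prod>k\<in>{1..m}-{i}. column_pair_coeff a i k)
      = (\<Prod>i\<in>{1..m}. \<Prod>k\<in>{k\<in>{1..m}. i < k}. column_pair_coeff a i k * column_pair_coeff a k i)"
    by (rule prod_offdiag_pairs) simp
  also have "\<dots> = (\<Prod>i\<in>{1..m}. \<Prod>k\<in>{k\<in>{1..m}. i < k}. if flip_col i < flip_col k then pair_coeff a i ^ 2 else 1)"
    using column_pair_coeff_swap by (intro prod.cong refl) auto
  also have "\<dots> = (\<Prod>i=1..m. (pair_coeff a i ^ 2) ^ greater_count i)"
  proof (rule prod.cong[OF refl])
    fix i
    have "(\<Prod>k\<in>{k\<in>{1..m}. i < k}. if flip_col i < flip_col k then pair_coeff a i ^ 2 else 1)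
        = (\<Prod>k\<in>{k \<in> {k \<in> {1..m}. i < k}. flip_col i < flip_col k}. pair_coeff a i ^ 2)"
      by (rule prod.inter_filter[symmetric]) simp
    also have "{k \<in> {k \<in> {1..m}. i < k}. flip_col i < flip_col k} = {k \<in> {1..m}. i < k \<and> flip_col i < flip_col k}"
      by auto
    finally show "(\<Prod>k\<in>{k\<in>{1..m}. i < k}. if flip_col i < flip_col k then pair_coeff a i ^ 2 else 1)
        = (pair_coeff a i ^ 2) ^ greater_count i"
      unfolding greater_count_def by simp
  qed
  finally show ?thesis .
qed

lemma ht_top_coeff_Htop:
  assumes a: "a \<noteq> 0"
  shows "ht_top_coeff a m Htop Vtop
    = sig (a^2) ^ m * (\<Prod>i=1..m. if i \<in> B then a^(4*greater_count i+3) else - (inverse a ^ (4*greater_count i+3)))"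
proof -
  have diag: "(\<Prod>k=1..m. column_pair_coeff a i k)
      = sig (a^2) * side_coeff a i * (\<Prod>k\<in>{1..m}-{i}. column_pair_coeff a i k)" if "i \<in> {1..m}" for i
    using prod.remove[of "{1..m}" i "column_pair_coeff a i"] that unfolding column_pair_coeff_def by simp
  have "ht_top_coeff a m Htop Vtop
      = (\<Prod>i=1..m. (\<Prod>k=1..m. column_pair_coeff a i k) * side_coeff a i) * (\<Prod>k=1..m. side_coeff a k)"
    unfolding ht_top_coeff_eq_prod_vertex_coeff prod_ht_vert prod_vertex_coeff_middle_row
    using prod_vertex_coeff_row_pair[OF _ a] vertex_coeff_last
    by (intro arg_cong2[where f="(*)"] prod.cong refl) auto
  also have "\<dots> = (\<Prod>i=1..m. sig (a^2) * side_coeff a i ^ 3 * (\<Prod>k\<in>{1..m}-{i}. column_pair_coeff a i k))"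
    unfolding prod.distrib[symmetric] using diag by (intro prod.cong refl) (simp add: algebra_simps power3_eq_cube)
  also have "\<dots> = sig (a^2) ^ m * (\<Prod>i=1..m. side_coeff a i ^ 3) * (\<Prod>i=1..m. (pair_coeff a i ^ 2) ^ greater_count i)"
    by (simp only: prod.distrib prod_constant prod_column_pair_coeff_offdiag card_atLeastAtMost diff_Suc_1)
  also have "\<dots> = sig (a^2) ^ m * (\<Prod>i=1..m. if i \<in> B then a^(4*greater_count i+3) else - (inverse a ^ (4*greater_count i+3)))"
    unfolding mult.assoc prod.distrib[symmetric] using side_pair_coeff_power[OF a] by simp
  finally show ?thesis .
qed

lemma greater_count_eq_greater_after:
  assumes "i \<in> {1..m}"
  shows "greater_count i = greater_after xs (i - 1)"
proof -
  have "{k \<in> {1..m}. i < k \<and> flip_col i < flip_col k} = Suc ` {k. i - 1 < k \<and> k < length xs \<and> xs ! (i - 1) < xs ! k}"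
    using assms length_finite_permutations_of_set[OF xs]
    by (auto simp: flip_col_def image_iff Suc_le_eq gr0_conv_Suc)
  then show ?thesis
    unfolding greater_count_def greater_after_def by (simp add: card_image)
qed

lemma prod_greater_count: "(\<Prod>i=1..m. h (greater_count i)) = lehmer_weight h xs"
proof -
  have "lehmer_weight h xs = (\<Prod>i<m. h (greater_after xs i))"
    using lehmer_weight_conv_greater_after[OF permutations_of_setD(2)[OF xs]]
      length_finite_permutations_of_set[OF xs] by simp
  then show ?thesis
    by (simp add: prod.atLeast1_atMost_eq greater_count_eq_greater_after)
qed

end

lemma sum_Pow_ht_top_coeff:
  assumes xs: "xs \<in> permutations_of_set {1..m}" and a: "a \<noteq> 0"
  shows "(\<Sum>B\<in>Pow {1..m}. ht_top_coeff a m (top_config.Htop m xs B) (top_config.Vtop m xs B))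
    = sig (a^2) ^ m * lehmer_weight (\<lambda>k. sig (a^(4*k+3))) xs"
proof -
  have P: "top_config m xs B" if "B \<in> Pow {1..m}" for B
    using that xs unfolding top_config_def by auto
  let ?n = "top_config.greater_count m xs"
  have "(\<Sum>B\<in>Pow {1..m}. ht_top_coeff a m (top_config.Htop m xs B) (top_config.Vtop m xs B))
      = sig (a^2) ^ m * (\<Sum>B\<in>Pow {1..m}. \<Prod>i=1..m. if i \<in> B then a^(4*?n i+3) else - (inverse a ^ (4*?n i+3)))"
    unfolding sum_distrib_left using top_config.ht_top_coeff_Htop[OF P a] by (intro sum.cong refl) auto
  also have "(\<Sum>B\<in>Pow {1..m}. \<Prod>i=1..m. if i \<in> B then a^(4*?n i+3) else - (inverse a ^ (4*?n i+3)))
      = (\<Prod>i=1..m. sig (a^(4*?n i+3)))"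
    unfolding sum_Pow_prod_if[OF finite_atLeastAtMost] by (simp add: sig_def power_inverse)
  also have "\<dots> = lehmer_weight (\<lambda>k. sig (a^(4*k+3))) xs"
    using top_config.prod_greater_count[OF P[of "{}"]] by simp
  finally show ?thesis .
qed

lemma sum_ht_top_coeff_maximal:
  assumes a: "a \<noteq> 0" and m: "m \<ge> 1"
  shows "(\<Sum>st\<in>{st \<in> ht_states m. ht_maximal m (fst st)}. ht_top_coeff a m (fst st) (snd st)) = C_HT a m"
proof -
  have "(\<Sum>st\<in>{st \<in> ht_states m. ht_maximal m (fst st)}. ht_top_coeff a m (fst st) (snd st))
      = (\<Sum>(xs,B)\<in>permutations_of_set {1..m} \<times> Pow {1..m}.
           ht_top_coeff a m (top_config.Htop m xs B) (top_config.Vtop m xs B))"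
    using sum.reindex_bij_betw[OF bij_betw_top_state[OF m], of "\<lambda>st. ht_top_coeff a m (fst st) (snd st)"]
    by (simp add: case_prod_beta top_state_def)
  also have "\<dots> = (\<Sum>xs\<in>permutations_of_set {1..m}. sig (a^2) ^ m * lehmer_weight (\<lambda>k. sig (a^(4*k+3))) xs)"
    unfolding sum.cartesian_product[symmetric] by (intro sum.cong refl, rule sum_Pow_ht_top_coeff[OF _ a])
  also have "\<dots> = C_HT a m"
    by (simp add: sum_distrib_left[symmetric] sum_lehmer_weight_permutations_of_set C_HT_eq_prod_sums[OF a])
  finally show ?thesis .
qed

lemma poly_xdeg_Zt_HT_minus_top:
  assumes "a \<noteq> 0" and "m \<ge> 1"
  shows "poly_xdeg (m+1) (\<lambda>d. d < 4*m*m + 2*m) (\<lambda>x y. Zt_HT a m x y - C_HT a m * top_monomial m x)"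
proof -
  let ?G = "\<lambda>st x y. ht_state_term a m (fst st) (snd st) x y
    - (if ht_maximal m (fst st) then ht_top_coeff a m (fst st) (snd st) * top_monomial m x else 0)"
  have "poly_xdeg (m+1) (\<lambda>d. d < 4*m*m + 2*m) (\<lambda>x y. \<Sum>st\<in>ht_states m. ?G st x y)"
    using poly_xdeg_state_term_minus_top assms(1) finite_ht_states by (intro poly_xdeg_sum) auto
  moreover have "(\<Sum>st\<in>ht_states m. ?G st x y) = Zt_HT a m x y - C_HT a m * top_monomial m x" for x y
  proof -
    have "(\<Sum>st\<in>ht_states m.
          if ht_maximal m (fst st) then ht_top_coeff a m (fst st) (snd st) * top_monomial m x else 0)
        = (\<Sum>st\<in>{st \<in> ht_states m. ht_maximal m (fst st)}. ht_top_coeff a m (fst st) (snd st))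
          * top_monomial m x"
      using finite_ht_states by (simp add: sum.inter_filter[symmetric] sum_distrib_right)
    then show ?thesis
      by (simp add: sum_subtractf Zt_HT_eq_sum_state_term case_prod_beta sum_ht_top_coeff_maximal[OF assms])
  qed
  ultimately show ?thesis by simp
qed

theorem lemma15:
  fixes a :: complex and m :: nat
  assumes "a \<noteq> 0" and "m \<ge> 1"
  shows "\<exists>E :: ((nat \<Rightarrow> nat) \<times> (nat \<Rightarrow> nat)) set. \<exists>c. finite E
    \<and> (\<forall>(e,f)\<in>E. (\<Sum>i=1..m+1. e i) < 4*m*m + 2*m)
    \<and> (\<forall>x y :: nat \<Rightarrow> complex. (\<forall>i\<in>{1..m+1}. x i \<noteq> 0 \<and> y i \<noteq> 0) \<longrightarrow>
         Zt_HT a m x y =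
           (\<Prod>i=1..m. x i ^ (4*m)) * x (m+1) ^ (2*m) * C_HT a m
           + (\<Sum>(e,f)\<in>E. c (e,f) * (\<Prod>i=1..m+1. x i ^ e i * y i ^ f i)))"
proof -
  obtain E c where E: "finite E" "\<forall>(e,f)\<in>E. xdeg (m+1) e < 4*m*m + 2*m"
    "\<forall>x y. nonzero_args (m+1) x y \<longrightarrow>
       Zt_HT a m x y - C_HT a m * top_monomial m x = (\<Sum>(e,f)\<in>E. c (e,f) * xy_monomial (m+1) e f x y)"
    using poly_xdeg_Zt_HT_minus_top[OF assms] by (rule poly_xdegE)
  show ?thesis
  proof (intro exI[of _ E] exI[of _ c] conjI allI impI)
    show "finite E" "\<forall>(e,f)\<in>E. (\<Sum>i=1..m+1. e i) < 4*m*m + 2*m"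
      using E(1,2) unfolding xdeg_def by auto
    fix x y :: "nat \<Rightarrow> complex"
    assume "\<forall>i\<in>{1..m+1}. x i \<noteq> 0 \<and> y i \<noteq> 0"
    then have "Zt_HT a m x y = C_HT a m * top_monomial m x + (\<Sum>(e,f)\<in>E. c (e,f) * xy_monomial (m+1) e f x y)"
      using E(3) unfolding nonzero_args_def by (simp add: diff_eq_eq add.commute)
    then show "Zt_HT a m x y = (\<Prod>i=1..m. x i ^ (4*m)) * x (m+1) ^ (2*m) * C_HT a m
        + (\<Sum>(e,f)\<in>E. c (e,f) * (\<Prod>i=1..m+1. x i ^ e i * y i ^ f i))"
      unfolding top_monomial_def xy_monomial_def by (simp only: mult.commute)
  qed
qed

end
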